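(* Let $K$ be a finite simplicial complex, $f$ an injective filtration function on $K$, and $n$ a positive integer. Assume $[a,b)$ (with $b$ finite) is a bar of the persistence module $\{H_n(K^f_r)\}_{r\in\mathbb{R}}$ represented by a class $[\alpha]\in H_n(K^f_a)$ born at $a$ and terminated at $b$, where $\alpha$ is an $n$-cycle. Choose $\varepsilon<(b-a)/4$ and assume that every other bar $[a_i,b_i)$ of $\{H_n(K^f_r)\}_{r\in\mathbb{R}}$ satisfies $a_i>a+2\varepsilon$ or $b_i<b-2\varepsilon$. Let $g$ be an injective filtration function with $\|f-g\|_\infty\le\varepsilon$, and assume that a matching of barcodes as in the stability theorem (see context) matches the bar $[a,b)$ to a bar $[a',b')$ of $\{H_n(K^g_r)\}_{r\in\mathbb{R}}$. Then: (1) the class of $\alpha$ in $\{H_n(K^g_r)\}_{r\in\mathbb{R}}$ terminates at $b'$; (2) if $\varepsilon\le\frac12\min\{R_u,R_l\}$, where $R_u=\min\{|f(\tau)-b|: \tau\text{ a birth }(n+1)\text{-simplex with } f(\tau)>b\}$ (or $\infty$ if none) and $R_l=\min\{|f(\tau)-b|: \tau\text{ a terminal }(n+1)\text{-simplex with } f(\tau)<b\}$ (or $\infty$ if none), then the simplex of $K$ terminating the bar $[a,b)$ in $K^f$ (the simplex with $f$-value $b$) is the same as the simplex terminating the bar $[a',b')$ in $K^g$ (the simplex with $g$-value $b'$).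
   Context: A filtration function on a finite simplicial complex $K$ is a map $f\colon K\to\mathbb{R}$ with $f(\sigma)\le f(\tau)$ whenever $\sigma$ is a face of $\tau$. Sublevel complexes are $K^f_r=f^{-1}((-\infty,r])$; homology is with coefficients in a fixed field $\mathbb{F}$, and $\{H_n(K^f_r)\}_r$ with inclusion-induced maps is a persistence module, decomposing as a finite direct sum of interval modules $\mathbb{F}_{[a_i,b_i)}$; the multiset of intervals is the barcode, its elements are bars. For a nontrivial class $[\alpha]\in H_n(K^f_r)$, its birth is the infimum of $q\le r$ such that $[\alpha]$ is in the image of $H_n(K^f_q)\to H_n(K^f_r)$ and its termination scale is the infimum of $q\ge r$ such that $[\alpha]$ maps to $0$ in $H_n(K^f_q)$. Since $f$ is injective, each simplex is either a birth simplex (adding it creates a new nontrivial homology class) or a terminal simplex (adding it makes a nontrivial homology class trivial). $\|f-g\|_\infty=\max_{\sigma\in K}|f(\sigma)-g(\sigma)|$. If $\|f-g\|_\infty\le\varepsilon$, with barcodes $\{[a_i,b_i)\}_{i\in I}$ of $f$ and $\{[a'_j,b'_j)\}_{j\in J}$ of $g$ in degree $n$, a matching as in the stability theorem is a bijection $\varphi\colon I'\to J'$ between subsets $I'\subseteq I$, $J'\subseteq J$ with $|a_i-a'_{\varphi(i)}|\le\varepsilon$ and $|b_i-b'_{\varphi(i)}|\le\varepsilon$ for $i\in I'$, $|a_i-b_i|\le2\varepsilon$ for $i\in I\setminus I'$ and $|a'_j-b'_j|\le2\varepsilon$ for $j\in J\setminus J'$ (such a matching exists by the stability theorem). *)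

theory Defs
  imports Main "HOL-Library.Extended_Real" "HOL-Library.Multiset" "HOL-Library.Function_Algebras"
begin

text \<open>Simplices are finite nonempty sets of vertices; vertices are linearly ordered,
  which fixes the orientation of every simplex. A simplex of dimension d has d+1 vertices.\<close>

definition simplicial_complex :: "('v::linorder) set set \<Rightarrow> bool" where
  "simplicial_complex K \<longleftrightarrow> finite K \<and>
     (\<forall>\<sigma>\<in>K. finite \<sigma> \<and> \<sigma> \<noteq> {} \<and> (\<forall>\<tau>. \<tau> \<subseteq> \<sigma> \<and> \<tau> \<noteq> {} \<longrightarrow> \<tau> \<in> K))"

definition filtration :: "('v::linorder) set set \<Rightarrow> ('v set \<Rightarrow> real) \<Rightarrow> bool" where
  "filtration K f \<longleftrightarrow> (\<forall>\<sigma>\<in>K. \<forall>\<tau>\<in>K. \<sigma> \<subseteq> \<tau> \<longrightarrow> f \<sigma> \<le> f \<tau>)"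

definition sublevel :: "'v set set \<Rightarrow> ('v set \<Rightarrow> real) \<Rightarrow> real \<Rightarrow> 'v set set" where
  "sublevel K f r = {\<sigma>\<in>K. f \<sigma> \<le> r}"

definition sup_norm_le :: "'v set set \<Rightarrow> ('v set \<Rightarrow> real) \<Rightarrow> ('v set \<Rightarrow> real) \<Rightarrow> real \<Rightarrow> bool" where
  "sup_norm_le K f g e \<longleftrightarrow> (\<forall>\<sigma>\<in>K. \<bar>f \<sigma> - g \<sigma>\<bar> \<le> e)"

definition chain :: "'v set set \<Rightarrow> nat \<Rightarrow> ('v set \<Rightarrow> 'k::field) \<Rightarrow> bool" where
  "chain L d c \<longleftrightarrow> (\<forall>\<sigma>. c \<sigma> \<noteq> 0 \<longrightarrow> \<sigma> \<in> L \<and> card \<sigma> = Suc d)"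

definition face_sign :: "('v::linorder) set \<Rightarrow> 'v set \<Rightarrow> 'k::field" where
  "face_sign \<sigma> \<tau> = (-1) ^ card {w\<in>\<sigma>. w < the_elem (\<sigma> - \<tau>)}"

text \<open>Simplicial boundary (non-augmented: the boundary of a vertex is 0).\<close>
definition bd :: "('v::linorder) set set \<Rightarrow> ('v set \<Rightarrow> 'k::field) \<Rightarrow> 'v set \<Rightarrow> 'k" where
  "bd K c = (\<lambda>\<tau>. if \<tau> = {} then 0 else
      (\<Sum>\<sigma>\<in>{\<sigma>\<in>K. \<tau> \<subseteq> \<sigma> \<and> card \<sigma> = Suc (card \<tau>)}. face_sign \<sigma> \<tau> * c \<sigma>))"

definition cycles :: "('v::linorder) set set \<Rightarrow> 'v set set \<Rightarrow> nat \<Rightarrow> ('v set \<Rightarrow> 'k::field) set" where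
  "cycles K L d = {c. chain L d c \<and> bd K c = 0}"

definition boundaries :: "('v::linorder) set set \<Rightarrow> 'v set set \<Rightarrow> nat \<Rightarrow> ('v set \<Rightarrow> 'k::field) set" where
  "boundaries K L d = {bd K e | e. chain L (Suc d) e}"

definition lincomb :: "(nat \<Rightarrow> 'k::field) \<Rightarrow> nat set \<Rightarrow> (nat \<Rightarrow> 'v set \<Rightarrow> 'k) \<Rightarrow> 'v set \<Rightarrow> 'k" where
  "lincomb c J z = (\<lambda>\<sigma>. \<Sum>i\<in>J. c i * z i \<sigma>)"

text \<open>An interval decomposition of the persistence module r \<mapsto> H_n(K^f_r):
  finitely many bars [a i, d i) with generators z i (n-cycles of K^f_{a i}) such that the
  classes of z i die at d i and, at every r, the classes of the generators of the bars
  containing r form a basis of H_n(K^f_r). This is exactly an isomorphism from the direct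
  sum of the interval modules F_[a i, d i) to the persistence module.\<close>

definition interval_decomp ::
  "('v::linorder) set set \<Rightarrow> ('v set \<Rightarrow> real) \<Rightarrow> nat \<Rightarrow> nat set \<Rightarrow> (nat \<Rightarrow> real) \<Rightarrow> (nat \<Rightarrow> ereal)
    \<Rightarrow> (nat \<Rightarrow> 'v set \<Rightarrow> 'k::field) \<Rightarrow> bool" where
  "interval_decomp K f n I a d z \<longleftrightarrow> finite I \<and>
     (\<forall>i\<in>I. ereal (a i) < d i \<and> z i \<in> cycles K (sublevel K f (a i)) n) \<and>
     (\<forall>r. \<forall>i\<in>I. d i \<le> ereal r \<longrightarrow> z i \<in> boundaries K (sublevel K f r) n) \<and>
     (\<forall>r. let J = {i\<in>I. a i \<le> r \<and> ereal r < d i} in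
        (\<forall>c. lincomb c J z \<in> boundaries K (sublevel K f r) n \<longrightarrow> (\<forall>i\<in>J. c i = 0)) \<and>
        (\<forall>y\<in>cycles K (sublevel K f r) n. \<exists>c. y - lincomb c J z \<in> boundaries K (sublevel K f r) n))"

definition barcode :: "'k::field itself \<Rightarrow> ('v::linorder) set set \<Rightarrow> ('v set \<Rightarrow> real) \<Rightarrow> nat
    \<Rightarrow> (real \<times> ereal) multiset" where
  "barcode TYPE('k) K f n = (SOME B. \<exists>I a d (z :: nat \<Rightarrow> 'v set \<Rightarrow> 'k).
      interval_decomp K f n I a d z \<and> B = image_mset (\<lambda>i. (a i, d i)) (mset_set I))"

definition birth_scale :: "('v::linorder) set set \<Rightarrow> ('v set \<Rightarrow> real) \<Rightarrow> nat \<Rightarrow> real \<Rightarrow> ('v set \<Rightarrow> 'k::field) \<Rightarrow> ereal" where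
  "birth_scale K f n r \<alpha> = Inf {ereal q | q. q \<le> r \<and>
      (\<exists>\<beta>\<in>cycles K (sublevel K f q) n. \<alpha> - \<beta> \<in> boundaries K (sublevel K f r) n)}"

text \<open>Termination scale of the class of the cycle \<alpha> in H_n(K^f_r) (\<infinity> if it never dies).\<close>
definition termination_scale :: "('v::linorder) set set \<Rightarrow> ('v set \<Rightarrow> real) \<Rightarrow> nat \<Rightarrow> real \<Rightarrow> ('v set \<Rightarrow> 'k::field) \<Rightarrow> ereal" where
  "termination_scale K f n r \<alpha> = Inf {ereal q | q. r \<le> q \<and> \<alpha> \<in> boundaries K (sublevel K f q) n}"

text \<open>A simplex \<sigma> of dimension
  d = card \<sigma> - 1 is a birth simplex if adding it creates a new nontrivial class in H_d, i.e.
  H_d(K^f_{<f \<sigma>}) \<rightarrow> H_d(K^f_{f \<sigma>}) is not surjective; it is terminal if adding it makes a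
  nontrivial class of H_{d-1}(K^f_{<f \<sigma>}) trivial.\<close>

definition strict_sublevel :: "'v set set \<Rightarrow> ('v set \<Rightarrow> real) \<Rightarrow> real \<Rightarrow> 'v set set" where
  "strict_sublevel K f r = {\<sigma>\<in>K. f \<sigma> < r}"

definition birth_simplex :: "'k::field itself \<Rightarrow> ('v::linorder) set set \<Rightarrow> ('v set \<Rightarrow> real) \<Rightarrow> 'v set \<Rightarrow> bool" where
  "birth_simplex TYPE('k) K f \<sigma> \<longleftrightarrow> \<sigma> \<in> K \<and>
     (\<exists>y \<in> (cycles K (sublevel K f (f \<sigma>)) (card \<sigma> - 1) :: ('v set \<Rightarrow> 'k) set).
        \<forall>w\<in>cycles K (strict_sublevel K f (f \<sigma>)) (card \<sigma> - 1).
          y - w \<notin> boundaries K (sublevel K f (f \<sigma>)) (card \<sigma> - 1))"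

definition terminal_simplex :: "'k::field itself \<Rightarrow> ('v::linorder) set set \<Rightarrow> ('v set \<Rightarrow> real) \<Rightarrow> 'v set \<Rightarrow> bool" where
  "terminal_simplex TYPE('k) K f \<sigma> \<longleftrightarrow> \<sigma> \<in> K \<and> 2 \<le> card \<sigma> \<and>
     (\<exists>y \<in> (cycles K (strict_sublevel K f (f \<sigma>)) (card \<sigma> - 2) :: ('v set \<Rightarrow> 'k) set).
        y \<notin> boundaries K (strict_sublevel K f (f \<sigma>)) (card \<sigma> - 2) \<and>
        y \<in> boundaries K (sublevel K f (f \<sigma>)) (card \<sigma> - 2))"

text \<open>Closeness of (possibly infinite) endpoints: two infinite endpoints are at distance 0.\<close>
definition ereal_close :: "real \<Rightarrow> ereal \<Rightarrow> ereal \<Rightarrow> bool" where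
  "ereal_close e x y \<longleftrightarrow> x = y \<or> (\<exists>u v. x = ereal u \<and> y = ereal v \<and> \<bar>u - v\<bar> \<le> e)"

definition stability_matching :: "real \<Rightarrow> (real \<times> ereal) multiset \<Rightarrow> (real \<times> ereal) multiset
    \<Rightarrow> ((real \<times> ereal) \<times> (real \<times> ereal)) multiset \<Rightarrow> bool" where
  "stability_matching e Bf Bg M \<longleftrightarrow>
     image_mset fst M \<subseteq># Bf \<and> image_mset snd M \<subseteq># Bg \<and>
     (\<forall>p\<in>#M. \<bar>fst (fst p) - fst (snd p)\<bar> \<le> e \<and> ereal_close e (snd (fst p)) (snd (snd p))) \<and>
     (\<forall>x\<in># Bf - image_mset fst M. ereal_close (2 * e) (ereal (fst x)) (snd x)) \<and>
     (\<forall>y\<in># Bg - image_mset snd M. ereal_close (2 * e) (ereal (fst y)) (snd y))"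

end

theory Submission
  imports Defs
begin

text \<open>
  Interval decompositions exist: take a basis of the cycles adapted to the sublevel filtration and
  perform Gaussian elimination ordered by the level at which combinations become boundaries.

  Since \<open>[a, b)\<close> is the only \<open>f\<close>-bar alive throughout \<open>[a + 2\<epsilon>, b - 2\<epsilon>]\<close>, interleaving the
  sublevel complexes of \<open>f\<close> and \<open>g\<close> shows that at most one \<open>g\<close>-bar covers \<open>[a + \<epsilon>, b - \<epsilon>]\<close>,
  namely the matched bar \<open>[a', b')\<close>. Modulo boundaries born before \<open>b - \<epsilon>\<close>, the class of \<open>\<alpha>\<close> at level
  \<open>a + \<epsilon>\<close> of \<open>g\<close> is then a nonzero multiple of the generator of that bar, so it dies exactly at \<open>b'\<close>.

  For the second claim let \<open>\<sigma>\<close> be the simplex with \<open>f \<sigma> = b\<close>. A non-terminal \<open>(n+1)\<close>-simplex only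
  bounds cycles that were already boundaries, and no terminal one lies within \<open>2\<epsilon>\<close> below \<open>b\<close>, so
  \<open>\<alpha>\<close> is a \<open>g\<close>-boundary at level \<open>g \<sigma>\<close>. A \<open>g\<close>-chain bounding \<open>\<alpha>\<close> earlier would have a top
  simplex above \<open>b\<close> in \<open>f\<close> that is a birth simplex, and none lies within \<open>2\<epsilon>\<close> above \<open>b\<close>.
  Hence \<open>b' = g \<sigma>\<close>.
\<close>

definition scale_fun :: "'k::field \<Rightarrow> ('a \<Rightarrow> 'k) \<Rightarrow> 'a \<Rightarrow> 'k" where
  "scale_fun c x = (\<lambda>s. c * x s)"

lemma scale_fun_apply [simp]: "scale_fun c x s = c * x s"
  by (simp add: scale_fun_def)

interpretation V: vector_space "scale_fun :: 'k::field \<Rightarrow> ('a \<Rightarrow> 'k) \<Rightarrow> 'a \<Rightarrow> 'k"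
  by unfold_locales (auto simp: fun_eq_iff algebra_simps)

lemma sum_fun_apply: "(\<Sum>i\<in>A. F i) x = (\<Sum>i\<in>A. F i x)"
  by (induction A rule: infinite_finite_induct) auto

lemma lincomb_eq_sum: "lincomb c J z = (\<Sum>i\<in>J. scale_fun (c i) (z i))"
  by (simp add: lincomb_def fun_eq_iff sum_fun_apply)

lemma lincomb_remove:
  assumes "finite J" "j \<in> J"
  shows "lincomb c J z = scale_fun (c j) (z j) + lincomb c (J - {j}) z"
  using assms by (simp add: lincomb_eq_sum sum.remove)

lemma lincomb_in_subspace:
  assumes "V.subspace S" "\<And>i. i \<in> J \<Longrightarrow> z i \<in> S"
  shows "lincomb c J z \<in> S"
  unfolding lincomb_eq_sum using assms by (intro V.subspace_sum V.subspace_scale) auto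

lemma chain_zero [simp]: "chain L d 0"
  by (auto simp: chain_def)

lemma chain_mono: "L \<subseteq> L' \<Longrightarrow> chain L d c \<Longrightarrow> chain L' d c"
  by (auto simp: chain_def)

lemma chain_add: "chain L d x \<Longrightarrow> chain L d y \<Longrightarrow> chain L d (x + y)"
  unfolding chain_def by (metis add.left_neutral plus_fun_apply)

lemma chain_diff: "chain L d x \<Longrightarrow> chain L d y \<Longrightarrow> chain L d (x - y)"
  unfolding chain_def by (metis diff_zero minus_apply)

lemma chain_scale: "chain L d x \<Longrightarrow> chain L d (scale_fun c x)"
  by (auto simp: chain_def)

lemma bd_zero [simp]: "bd K 0 = 0"
  by (simp add: bd_def fun_eq_iff)

lemma bd_add: "bd K (x + y) = bd K x + bd K y"
  by (simp add: bd_def fun_eq_iff sum.distrib distrib_left)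

lemma bd_diff: "bd K (x - y) = bd K x - bd K y"
  by (simp add: bd_def fun_eq_iff sum_subtractf right_diff_distrib)

lemma bd_scale: "bd K (scale_fun c x) = scale_fun c (bd K x)"
  by (simp add: bd_def fun_eq_iff sum_distrib_left algebra_simps)

lemma bd_sum: "bd K (\<Sum>i\<in>A. F i) = (\<Sum>i\<in>A. bd K (F i))"
proof (induction A rule: infinite_finite_induct)
  case (infinite A)
  then show ?case by (metis sum.infinite bd_zero)
next
  case empty
  then show ?case by (simp only: sum.empty bd_zero)
next
  case (insert x B)
  show ?case by (simp only: sum.insert[OF insert(1,2)] bd_add insert(3))
qed

lemma cycles_subspace: "V.subspace (cycles K L d :: (_ \<Rightarrow> 'k::field) set)"
  by (auto simp: V.subspace_def cycles_def chain_add chain_scale bd_add bd_scale)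

lemma boundaries_subspace: "V.subspace (boundaries K L d :: (_ \<Rightarrow> 'k::field) set)"
  unfolding V.subspace_def boundaries_def
proof (intro conjI ballI allI)
  show "0 \<in> {bd K e |e. chain L (Suc d) e}"
    by (metis (mono_tags) bd_zero chain_zero mem_Collect_eq)
next
  fix x y :: "_ \<Rightarrow> 'k" assume "x \<in> {bd K e |e. chain L (Suc d) e}" "y \<in> {bd K e |e. chain L (Suc d) e}"
  then show "x + y \<in> {bd K e |e. chain L (Suc d) e}"
    by (auto simp: bd_add[symmetric] intro: chain_add)
next
  fix c and x :: "_ \<Rightarrow> 'k" assume "x \<in> {bd K e |e. chain L (Suc d) e}"
  then show "scale_fun c x \<in> {bd K e |e. chain L (Suc d) e}"
    by (auto simp: bd_scale[symmetric] intro: chain_scale)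
qed

lemma cycles_mono: "L \<subseteq> L' \<Longrightarrow> cycles K L d \<subseteq> cycles K L' d"
  by (auto simp: cycles_def chain_def)

lemma boundaries_mono: "L \<subseteq> L' \<Longrightarrow> boundaries K L d \<subseteq> boundaries K L' d"
  by (auto simp: boundaries_def chain_def)

lemma chain_empty: "chain {} d c \<longleftrightarrow> c = 0"
  by (auto simp: chain_def fun_eq_iff)

lemma cycles_empty: "cycles K {} d = {0}"
  by (auto simp: cycles_def chain_empty)

lemma boundaries_empty: "boundaries K {} d = ({0} :: (_ \<Rightarrow> 'k::field) set)"
  by (simp add: boundaries_def chain_empty)

definition elementary_chain :: "'a \<Rightarrow> 'a \<Rightarrow> 'k::field" where
  "elementary_chain s = (\<lambda>t. if t = s then 1 else 0)"

lemma chain_elementary_chain: "\<sigma> \<in> L \<Longrightarrow> card \<sigma> = Suc d \<Longrightarrow> chain L d (elementary_chain \<sigma>)"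
  by (auto simp: chain_def elementary_chain_def)

lemma chain_eq_sum_elementary_chain:
  assumes "finite K" "L \<subseteq> K" "chain L d c"
  shows "c = (\<Sum>s\<in>K. scale_fun (c s) (elementary_chain s))"
proof
  fix t show "c t = (\<Sum>s\<in>K. scale_fun (c s) (elementary_chain s)) t"
    using assms by (auto simp: sum_fun_apply elementary_chain_def chain_def if_distrib cong: if_cong)
qed

lemma chain_in_span_elementary_chains:
  assumes "finite K" "L \<subseteq> K" "chain L d c"
  shows "c \<in> V.span (elementary_chain ` K)"
  by (subst chain_eq_sum_elementary_chain[OF assms]) (intro V.span_sum V.span_scale V.span_base imageI)

lemma bd_chain_in_subspace:
  assumes "finite K" "L \<subseteq> K" "chain L d c" "V.subspace S"
    and "\<And>\<tau>. c \<tau> \<noteq> 0 \<Longrightarrow> bd K (elementary_chain \<tau>) \<in> S"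
  shows "bd K c \<in> S"
proof -
  have "bd K c = (\<Sum>s\<in>K. scale_fun (c s) (bd K (elementary_chain s)))"
    by (subst chain_eq_sum_elementary_chain[OF assms(1-3)]) (simp add: bd_sum bd_scale)
  also have "\<dots> \<in> S"
  proof (rule V.subspace_sum[OF assms(4)])
    fix s
    show "scale_fun (c s) (bd K (elementary_chain s)) \<in> S"
    proof (cases "c s = 0")
      case True
      then have "scale_fun (c s) (bd K (elementary_chain s)) = 0" by (simp add: fun_eq_iff)
      then show ?thesis using V.subspace_0[OF assms(4)] by (simp only:)
    next
      case False
      then show ?thesis using assms(5) V.subspace_scale[OF assms(4)] by blast
    qed
  qed
  finally show ?thesis .
qed

lemma simplicial_complex_finite: "simplicial_complex K \<Longrightarrow> finite K"
  by (simp add: simplicial_complex_def)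

lemma simplex_finite: "simplicial_complex K \<Longrightarrow> \<sigma> \<in> K \<Longrightarrow> finite \<sigma>"
  unfolding simplicial_complex_def by blast

lemma face_closed: "simplicial_complex K \<Longrightarrow> \<sigma> \<in> K \<Longrightarrow> \<tau> \<subseteq> \<sigma> \<Longrightarrow> \<tau> \<noteq> {} \<Longrightarrow> \<tau> \<in> K"
  unfolding simplicial_complex_def by blast

lemma face_sign_insert:
  assumes "u \<notin> \<tau>"
  shows "face_sign (insert u \<tau>) \<tau> = (-1) ^ card {x\<in>\<tau>. x < u}"
proof -
  have "insert u \<tau> - \<tau> = {u}" "{x\<in>insert u \<tau>. x < u} = {x\<in>\<tau>. x < u}"
    using assms by auto
  then show ?thesis by (simp add: face_sign_def)
qed

lemma face_sign_anticomm:
  assumes "finite \<tau>" "u \<notin> \<tau>" "w \<notin> \<tau>" "u < w"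
  defines "\<sigma> \<equiv> insert u (insert w \<tau>)"
  shows "face_sign (insert u \<tau>) \<tau> * face_sign \<sigma> (insert u \<tau>)
       + face_sign (insert w \<tau>) \<tau> * face_sign \<sigma> (insert w \<tau>) = (0 :: 'k::field)"
proof -
  define A where "A = card {x\<in>\<tau>. x < u}"
  define B where "B = card {x\<in>\<tau>. x < w}"
  have "\<sigma> - insert u \<tau> = {w}" "{x\<in>\<sigma>. x < w} = insert u {x\<in>\<tau>. x < w}"
    using assms by auto
  moreover have "card (insert u {x\<in>\<tau>. x < w}) = Suc B"
    using assms by (simp add: B_def)
  ultimately have s1: "face_sign \<sigma> (insert u \<tau>) = ((-1) ^ Suc B :: 'k)"
    by (simp add: face_sign_def)
  have "\<sigma> - insert w \<tau> = {u}" "{x\<in>\<sigma>. x < u} = {x\<in>\<tau>. x < u}"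
    using assms by auto
  then have s2: "face_sign \<sigma> (insert w \<tau>) = ((-1) ^ A :: 'k)"
    by (simp add: face_sign_def A_def)
  show ?thesis
    unfolding s1 s2 face_sign_insert[OF assms(2)] face_sign_insert[OF assms(3)] A_def[symmetric] B_def[symmetric]
    by (simp add: mult.commute)
qed

lemma faces_between_codim2:
  assumes "simplicial_complex K" "\<sigma> \<in> K" "\<tau> \<noteq> {}" "\<tau> \<subseteq> \<sigma>" "\<sigma> - \<tau> = {u, w}" "u \<noteq> w"
  shows "{\<rho>\<in>K. \<tau> \<subseteq> \<rho> \<and> card \<rho> = Suc (card \<tau>) \<and> \<rho> \<subseteq> \<sigma>} = {insert u \<tau>, insert w \<tau>}"
proof -
  have fin\<tau>: "finite \<tau>"
    using assms finite_subset simplex_finite by blast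
  have "\<rho> = insert u \<tau> \<or> \<rho> = insert w \<tau>"
    if "\<tau> \<subseteq> \<rho>" "\<rho> \<subseteq> \<sigma>" "card \<rho> = Suc (card \<tau>)" for \<rho>
  proof -
    have "card (\<rho> - \<tau>) = 1"
      using card_Diff_subset[OF fin\<tau> that(1)] that(3) by simp
    then obtain z where "\<rho> - \<tau> = {z}"
      by (auto simp: card_1_singleton_iff)
    then have "z \<in> {u, w}" "\<rho> = insert z \<tau>"
      using that assms(5) by auto
    then show ?thesis
      by auto
  qed
  moreover have "u \<in> \<sigma>" "w \<in> \<sigma>" "u \<notin> \<tau>" "w \<notin> \<tau>"
    using assms(5) by auto
  moreover from this have "insert u \<tau> \<in> K" "insert w \<tau> \<in> K"
    using face_closed[OF assms(1,2)] assms(4) by auto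
  ultimately show ?thesis
    using assms(4) fin\<tau> by (intro equalityI subsetI) auto
qed

lemma sum_face_sign_codim2:
  assumes K: "simplicial_complex K" and \<sigma>K: "\<sigma> \<in> K" and \<tau>: "\<tau> \<noteq> {}"
  shows "(\<Sum>\<rho>\<in>{\<rho>\<in>K. \<tau> \<subseteq> \<rho> \<and> card \<rho> = Suc (card \<tau>) \<and> \<rho> \<subseteq> \<sigma> \<and> card \<sigma> = Suc (card \<rho>)}.
            face_sign \<rho> \<tau> * face_sign \<sigma> \<rho>) = (0 :: 'k::field)"
proof (cases "\<tau> \<subseteq> \<sigma> \<and> card \<sigma> = Suc (Suc (card \<tau>))")
  case True
  have fin\<tau>: "finite \<tau>"
    using True K \<sigma>K finite_subset simplex_finite by blast
  then have "card (\<sigma> - \<tau>) = 2"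
    using True by (simp add: card_Diff_subset)
  then obtain u w where uw: "\<sigma> - \<tau> = {u, w}" "u < w"
    by (metis card_2_iff insert_commute linorder_neqE)
  then have "u \<notin> \<tau>" "w \<notin> \<tau>" "\<sigma> = insert u (insert w \<tau>)"
    using True by auto
  moreover have "{\<rho>\<in>K. \<tau> \<subseteq> \<rho> \<and> card \<rho> = Suc (card \<tau>) \<and> \<rho> \<subseteq> \<sigma> \<and> card \<sigma> = Suc (card \<rho>)}
      = {insert u \<tau>, insert w \<tau>}"
    using faces_between_codim2[OF K \<sigma>K \<tau>, of u w] True uw fin\<tau> calculation by auto
  moreover have "insert u \<tau> \<noteq> insert w \<tau>"
    using \<open>u \<notin> \<tau>\<close> \<open>u < w\<close> by (metis insert_iff less_irrefl)
  ultimately show ?thesis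
    using face_sign_anticomm[OF fin\<tau>, of u w] uw by simp
next
  case False
  then have "{\<rho>\<in>K. \<tau> \<subseteq> \<rho> \<and> card \<rho> = Suc (card \<tau>) \<and> \<rho> \<subseteq> \<sigma> \<and> card \<sigma> = Suc (card \<rho>)} = {}"
    by auto
  then show ?thesis
    by (simp only: sum.empty)
qed

lemma bd_bd:
  assumes K: "simplicial_complex K"
  shows "bd K (bd K c) = (0 :: 'a::linorder set \<Rightarrow> 'k::field)"
proof
  fix \<tau> :: "'a set"
  define R where "R x = {\<rho>\<in>K. x \<subseteq> \<rho> \<and> card \<rho> = Suc (card x)}" for x :: "'a set"
  show "bd K (bd K c) \<tau> = 0 \<tau>"
  proof (cases "\<tau> = {}")
    case False
    have "bd K (bd K c) \<tau> = (\<Sum>\<rho>\<in>R \<tau>. face_sign \<rho> \<tau> * bd K c \<rho>)"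
      using False by (simp add: bd_def R_def)
    also have "\<dots> = (\<Sum>\<rho>\<in>R \<tau>. \<Sum>\<sigma>\<in>R \<rho>. face_sign \<rho> \<tau> * face_sign \<sigma> \<rho> * c \<sigma>)"
    proof (rule sum.cong[OF refl])
      fix \<rho> assume "\<rho> \<in> R \<tau>"
      then have "\<rho> \<noteq> {}"
        using False by (auto simp: R_def)
      then show "face_sign \<rho> \<tau> * bd K c \<rho> = (\<Sum>\<sigma>\<in>R \<rho>. face_sign \<rho> \<tau> * face_sign \<sigma> \<rho> * c \<sigma>)"
        by (simp add: bd_def R_def sum_distrib_left mult.assoc)
    qed
    also have "\<dots> = (\<Sum>\<sigma>\<in>K. \<Sum>\<rho>\<in>{\<rho>\<in>R \<tau>. \<rho> \<subseteq> \<sigma> \<and> card \<sigma> = Suc (card \<rho>)}.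
                        face_sign \<rho> \<tau> * face_sign \<sigma> \<rho> * c \<sigma>)"
      using simplicial_complex_finite[OF K] unfolding R_def
      by (subst sum.swap_restrict) (auto intro!: sum.cong)
    also have "\<dots> = (\<Sum>\<sigma>\<in>K. c \<sigma> * (\<Sum>\<rho>\<in>{\<rho>\<in>R \<tau>. \<rho> \<subseteq> \<sigma> \<and> card \<sigma> = Suc (card \<rho>)}.
                        face_sign \<rho> \<tau> * face_sign \<sigma> \<rho>))"
      by (simp add: sum_distrib_left mult.commute mult.left_commute)
    also have "\<dots> = 0"
      by (intro sum.neutral) (simp add: R_def conj_assoc sum_face_sign_codim2[OF K _ False])
    finally show ?thesis by simp
  qed (simp add: bd_def)
qed

section \<open>Filtrations of vector spaces and adapted bases\<close>

definition step_filtration :: "real set \<Rightarrow> (real \<Rightarrow> 'b::zero set) \<Rightarrow> bool" where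
  "step_filtration T Z \<longleftrightarrow> finite T \<and>
     (\<forall>r. Z r = (if \<exists>t\<in>T. t \<le> r then Z (Max {t\<in>T. t \<le> r}) else {0}))"

lemma step_filtrationD:
  assumes "step_filtration T Z"
  shows "finite T"
    and "\<exists>t\<in>T. t \<le> r \<Longrightarrow> Z r = Z (Max {t\<in>T. t \<le> r})"
    and "\<not> (\<exists>t\<in>T. t \<le> r) \<Longrightarrow> Z r = {0}"
  using assms unfolding step_filtration_def by metis+

lemma step_filtration_least_level:
  fixes B :: "real \<Rightarrow> 'b::zero set"
  assumes B: "step_filtration T B" and X: "0 \<notin> X" "X \<inter> B s \<noteq> {}"
  shows "\<exists>s0. X \<inter> B s0 \<noteq> {} \<and> (\<forall>s. X \<inter> B s \<noteq> {} \<longrightarrow> s0 \<le> s)"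
proof -
  define S where "S = {t\<in>T. X \<inter> B t \<noteq> {}}"
  have finT: "finite T"
    using step_filtrationD(1)[OF B] .
  have below: "\<exists>t\<in>S. t \<le> s" if "X \<inter> B s \<noteq> {}" for s
  proof -
    have ex: "\<exists>t\<in>T. t \<le> s"
      using that X(1) step_filtrationD(3)[OF B] by fastforce
    then have "Max {t\<in>T. t \<le> s} \<in> {t\<in>T. t \<le> s}"
      using finT by (intro Max_in) auto
    then show ?thesis
      using that step_filtrationD(2)[OF B ex] by (auto simp: S_def)
  qed
  have "finite S" "S \<noteq> {}"
    using finT below[OF X(2)] by (auto simp: S_def)
  then show ?thesis
    using below Min_in Min_le order_trans by (metis (mono_tags, lifting) S_def mem_Collect_eq)
qed

lemma step_filtration_earliest_element:
  fixes B :: "real \<Rightarrow> 'b::zero set"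
  assumes B: "step_filtration T B" "mono B" and X: "0 \<notin> X" "u \<in> X"
  obtains w and e :: ereal where "w \<in> X" "\<forall>s. e \<le> ereal s \<longrightarrow> w \<in> B s"
    "\<forall>s. X \<inter> B s \<noteq> {} \<longrightarrow> e \<le> ereal s"
proof (cases "\<exists>s. X \<inter> B s \<noteq> {}")
  case True
  then obtain s0 where s0: "X \<inter> B s0 \<noteq> {}" "\<forall>s. X \<inter> B s \<noteq> {} \<longrightarrow> s0 \<le> s"
    using step_filtration_least_level[OF B(1) X(1)] by blast
  then obtain w where "w \<in> X" "w \<in> B s0"
    by blast
  then show ?thesis
    using s0 monoD[OF B(2)] by (intro that[of w "ereal s0"]) auto
next
  case False
  then show ?thesis
    using X(2) by (intro that[of u "\<infinity>"]) auto
qed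

lemma downward_closed_eq_lessThan:
  fixes P :: "nat set"
  assumes "finite P" "\<And>p q. q \<le> p \<Longrightarrow> p \<in> P \<Longrightarrow> q \<in> P"
  shows "P = {..<card P}"
proof (cases "P = {}")
  case False
  have "P = {..<Suc (Max P)}"
    using assms(2)[of _ "Max P"] False Max_ge[OF assms(1)] Max_in[OF assms(1)]
    by (auto simp: less_Suc_eq_le)
  then show ?thesis
    by (metis card_lessThan)
qed simp

context vector_space
begin

lemma subspace_diff_mem_iff:
  assumes "subspace S" "x - y \<in> S"
  shows "x \<in> S \<longleftrightarrow> y \<in> S"
  using subspace_diff[OF assms(1) _ assms(2), of x] subspace_add[OF assms(1) assms(2), of y] by auto

lemma subspace_scale_mem_iff:
  assumes "subspace S" "c \<noteq> 0"
  shows "c *s x \<in> S \<longleftrightarrow> x \<in> S"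
  using subspace_scale[OF assms(1), of "c *s x" "inverse c"] subspace_scale[OF assms(1), of x c] assms(2)
  by auto

lemma span_insert_exchange:
  assumes "w \<in> span (insert u S)" "w \<notin> span S"
  shows "span (insert w S) = span (insert u S)"
  using in_span_insert[OF assms] assms(1) span_superset[of S] span_mono[of S "insert _ S"]
  unfolding span_eq by blast

lemma subspace_inter_span_insert_subset:
  assumes "subspace S" "subspace T" "S \<inter> span W \<subseteq> T" "w \<in> S" "w \<in> T"
  shows "S \<inter> span (insert w W) \<subseteq> T"
proof
  fix v assume v: "v \<in> S \<inter> span (insert w W)"
  then obtain k where k: "v - k *s w \<in> span W"
    by (auto simp: span_insert)
  have "v - k *s w \<in> S"
    using v assms(1,4) by (auto intro: subspace_diff subspace_scale)
  then have "v - k *s w \<in> T"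
    using k assms(3) by blast
  then have "(v - k *s w) + k *s w \<in> T"
    using assms(2,5) by (intro subspace_add subspace_scale)
  then show "v \<in> T"
    by simp
qed

lemma exists_basis_adapted_to_death:
  fixes B :: "real \<Rightarrow> 'b set"
  assumes Bsub: "\<And>s. subspace (B s)" and Bmono: "mono B" and Bstep: "step_filtration T B"
  shows "independent (set us) \<Longrightarrow> distinct us \<Longrightarrow>
    \<exists>ws (\<delta> :: nat \<Rightarrow> ereal). length ws = length us \<and> distinct ws \<and> independent (set ws) \<and>
      (\<forall>p \<le> length us. span (set (take p ws)) = span (set (take p us))) \<and>
      (\<forall>p<length us. \<forall>s. \<delta> p \<le> ereal s \<longrightarrow> ws!p \<in> B s) \<and>
      (\<forall>s. B s \<inter> span (set us) \<subseteq> span ((!) ws ` {p. p < length us \<and> \<delta> p \<le> ereal s}))"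
proof (induction us rule: rev_induct)
  case Nil
  show ?case
    by (rule exI[of _ "[]"], rule exI[of _ "\<lambda>_. 0"]) (auto simp: span_zero independent_empty)
next
  case (snoc u us)
  have uU: "u \<notin> span (set us)" and dus: "distinct us"
    using snoc.prems by (auto simp: independent_insert)
  have indus: "independent (set us)"
    using snoc.prems(1) independent_mono by auto
  obtain ws \<delta> where len: "length ws = length us" and dws: "distinct ws" and iws: "independent (set ws)"
    and tk: "\<forall>p \<le> length us. span (set (take p ws)) = span (set (take p us))"
    and dB: "\<forall>p<length us. \<forall>s. \<delta> p \<le> ereal s \<longrightarrow> ws!p \<in> B s"
    and Bsp: "\<forall>s. B s \<inter> span (set us) \<subseteq> span ((!) ws ` {p. p < length us \<and> \<delta> p \<le> ereal s})"
    using snoc.IH[OF indus dus] by blast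
  have spws: "span (set ws) = span (set us)"
    using tk len by auto
  \<comment> \<open>Gaussian elimination step: the new pivot is a vector of the new span that becomes a
     boundary as early as possible.\<close>
  define X where "X = span (insert u (set us)) - span (set us)"
  have "0 \<notin> X" "u \<in> X"
    using uU by (auto simp: X_def span_zero intro: span_base)
  then obtain w and e :: ereal where wX: "w \<in> X" and we: "\<forall>s. e \<le> ereal s \<longrightarrow> w \<in> B s"
    and emin: "\<forall>s. X \<inter> B s \<noteq> {} \<longrightarrow> e \<le> ereal s"
    using step_filtration_earliest_element[OF Bstep Bmono] by metis
  have wU: "w \<notin> span (set ws)"
    using wX spws by (auto simp: X_def)
  have sp_eq: "span (insert w (set ws)) = span (insert u (set us))"
  proof -
    have "span (insert w (set ws)) = span (insert w (set us))"
      by (simp add: span_insert spws)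
    also have "\<dots> = span (insert u (set us))"
      using wX by (intro span_insert_exchange) (auto simp: X_def)
    finally show ?thesis .
  qed
  define n where "n = length us"
  define ws' where "ws' = ws @ [w]"
  define \<delta>' where "\<delta>' = \<delta>(n := e)"
  have T1: "span ((!) ws ` {p. p < length us \<and> \<delta> p \<le> ereal s})
      \<subseteq> span ((!) ws' ` {p. p < length (us @ [u]) \<and> \<delta>' p \<le> ereal s})" for s
    by (rule span_mono) (use len in \<open>force simp: ws'_def \<delta>'_def n_def nth_append\<close>)
  show ?case
  proof (rule exI[of _ ws'], rule exI[of _ \<delta>'], intro conjI allI impI)
    show "length ws' = length (us @ [u])" "distinct ws'" "independent (set ws')"
      using len dws wU iws independent_insertI[OF wU iws] by (auto simp: ws'_def intro: span_base)
  next
    fix p assume "p \<le> length (us @ [u])"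
    then consider "p \<le> n" | "p = Suc n"
      by (force simp: n_def)
    then show "span (set (take p ws')) = span (set (take p (us @ [u])))"
      by cases (use tk sp_eq len in \<open>simp_all add: ws'_def n_def\<close>)
  next
    fix p s assume "p < length (us @ [u])" "\<delta>' p \<le> ereal s"
    then show "ws' ! p \<in> B s"
      using dB we len by (cases "p < n") (auto simp: ws'_def \<delta>'_def n_def nth_append)
  next
    fix s
    let ?T = "span ((!) ws' ` {p. p < length (us @ [u]) \<and> \<delta>' p \<le> ereal s})"
    show "B s \<inter> span (set (us @ [u])) \<subseteq> ?T"
    proof (cases "e \<le> ereal s")
      case True
      then have "w \<in> B s" "w \<in> ?T"
        using we len by (auto simp: ws'_def \<delta>'_def n_def nth_append intro!: span_base image_eqI[of _ _ n])
      moreover have "B s \<inter> span (set ws) \<subseteq> ?T"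
        using Bsp T1 spws by blast
      ultimately have "B s \<inter> span (insert w (set ws)) \<subseteq> ?T"
        by (intro subspace_inter_span_insert_subset[OF Bsub subspace_span])
      then show ?thesis
        using sp_eq by simp
    next
      case False
      then have "B s \<inter> span (set (us @ [u])) \<subseteq> span (set us)"
        using emin by (auto simp: X_def)
      then show ?thesis
        using Bsp T1 by blast
    qed
  qed
qed

lemma extend_independent_list_to_basis:
  assumes "subspace S" "finite F" "S \<subseteq> span F" "independent (set us)" "distinct us" "set us \<subseteq> S"
  obtains vs where "distinct (us @ vs)" "independent (set (us @ vs))" "span (set (us @ vs)) = S"
proof -
  obtain B where B: "set us \<subseteq> B" "B \<subseteq> S" "independent B" "S \<subseteq> span B"
    using maximal_independent_subset_extend[OF assms(6,4)] by metis
  have "finite B"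
    using independent_span_bound[OF assms(2) B(3)] B(2) assms(3) by blast
  then obtain vs where "set vs = B - set us" "distinct vs"
    using finite_distinct_list[of "B - set us"] by blast
  then have "set (us @ vs) = B" "distinct (us @ vs)"
    using B(1) assms(5) by auto
  then show ?thesis
    using that[of vs] B(3) span_subspace[OF B(2,4) assms(1)] by argo
qed

lemma exists_basis_adapted_to_levels:
  fixes Z :: "real \<Rightarrow> 'b set"
  assumes Zsub: "\<And>r. subspace (Z r)" and Zmono: "mono Z"
    and finF: "finite F" and Zspan: "\<And>r. Z r \<subseteq> span F"
  shows "sorted ts \<Longrightarrow> distinct ts \<Longrightarrow> \<exists>us a. distinct us \<and> independent (set us) \<and>
     (\<forall>p q. p \<le> q \<longrightarrow> q < length us \<longrightarrow> a p \<le> a q) \<and> (\<forall>p<length us. a p \<in> set ts) \<and>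
     (\<forall>t\<in>set ts. Z t = span ((!) us ` {p. p < length us \<and> a p \<le> t}))"
proof (induction ts rule: rev_induct)
  case Nil
  show ?case
    by (rule exI[of _ "[]"]) (auto simp: independent_empty)
next
  case (snoc t ts)
  have lt: "\<forall>x\<in>set ts. x < t"
    using snoc.prems by (auto simp: sorted_append) (metis dual_order.order_iff_strict)
  obtain us a where dus: "distinct us" and ius: "independent (set us)"
    and sa: "\<forall>p q. p \<le> q \<longrightarrow> q < length us \<longrightarrow> a p \<le> a q" and ats: "\<forall>p<length us. a p \<in> set ts"
    and Zt: "\<forall>t\<in>set ts. Z t = span ((!) us ` {p. p < length us \<and> a p \<le> t})"
    using snoc.IH snoc.prems by (auto simp: sorted_append)
  have "set us \<subseteq> Z t"
  proof
    fix x assume "x \<in> set us"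
    then obtain p where p: "p < length us" "x = us ! p"
      by (auto simp: in_set_conv_nth)
    have "x \<in> span ((!) us ` {q. q < length us \<and> a q \<le> a p})"
      using p by (auto intro!: span_base)
    also have "\<dots> = Z (a p)"
      using Zt ats p by auto
    also have "\<dots> \<subseteq> Z t"
      using monoD[OF Zmono] ats p lt by (meson less_imp_le)
    finally show "x \<in> Z t" .
  qed
  then obtain vs where vs: "distinct (us @ vs)" "independent (set (us @ vs))" "span (set (us @ vs)) = Z t"
    using extend_independent_list_to_basis[OF Zsub finF Zspan ius dus] by blast
  define us' where "us' = us @ vs"
  define a' where "a' = (\<lambda>p. if p < length us then a p else t)"
  show ?case
  proof (rule exI[of _ us'], rule exI[of _ a'], intro conjI allI impI ballI)
    show "distinct us'" "independent (set us')"
      using vs by (simp_all add: us'_def)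
  next
    fix p q assume "p \<le> q" "q < length us'"
    then show "a' p \<le> a' q"
      using sa ats lt by (auto simp: a'_def less_imp_le)
  next
    fix p assume "p < length us'"
    then show "a' p \<in> set (ts @ [t])"
      using ats by (auto simp: a'_def)
  next
    fix t' assume t': "t' \<in> set (ts @ [t])"
    show "Z t' = span ((!) us' ` {p. p < length us' \<and> a' p \<le> t'})"
    proof (cases "t' = t")
      case True
      have "(!) us' ` {p. p < length us' \<and> a' p \<le> t'} = set us'"
        using True ats lt by (auto simp: a'_def in_set_conv_nth less_imp_le)
      then show ?thesis
        using vs(3) True by (simp add: us'_def)
    next
      case False
      then have t'ts: "t' \<in> set ts" "t' < t"
        using t' lt by auto
      then have "(!) us' ` {p. p < length us' \<and> a' p \<le> t'} = (!) us ` {p. p < length us \<and> a p \<le> t'}"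
        by (force simp: a'_def us'_def nth_append)
      then show ?thesis
        using Zt t'ts by simp
    qed
  qed
qed

lemma exists_basis_adapted_to_step_filtration:
  fixes Z :: "real \<Rightarrow> 'b set"
  assumes Zsub: "\<And>r. subspace (Z r)" and Zmono: "mono Z" and Zstep: "step_filtration T Z"
    and finF: "finite F" and Zspan: "\<And>r. Z r \<subseteq> span F"
  obtains us a where "distinct us" "independent (set us)"
    "\<And>p q. p \<le> q \<Longrightarrow> q < length us \<Longrightarrow> a p \<le> a q"
    "\<And>r. Z r = span ((!) us ` {p. p < length us \<and> a p \<le> r})"
proof -
  have finT: "finite T"
    using step_filtrationD(1)[OF Zstep] .
  obtain us a where dus: "distinct us" and ius: "independent (set us)"
    and sa: "\<forall>p q. p \<le> q \<longrightarrow> q < length us \<longrightarrow> a p \<le> a q" and aT: "\<forall>p<length us. a p \<in> T"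
    and Zt: "\<forall>t\<in>T. Z t = span ((!) us ` {p. p < length us \<and> a p \<le> t})"
    using exists_basis_adapted_to_levels[OF Zsub Zmono finF Zspan, of "sorted_list_of_set T"] finT
    by auto
  have "Z r = span ((!) us ` {p. p < length us \<and> a p \<le> r})" for r
  proof (cases "\<exists>t\<in>T. t \<le> r")
    case True
    define tm where "tm = Max {t\<in>T. t \<le> r}"
    have fin: "finite {t\<in>T. t \<le> r}"
      using finT by simp
    have tm: "tm \<in> T" "tm \<le> r"
      using Max_in[OF fin] True by (auto simp: tm_def)
    have "{p. p < length us \<and> a p \<le> tm} = {p. p < length us \<and> a p \<le> r}"
      using tm aT Max_ge[OF fin] by (auto simp: tm_def)
    then show ?thesis
      using step_filtrationD(2)[OF Zstep True] Zt tm by (simp add: tm_def)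
  next
    case False
    then have "{p. p < length us \<and> a p \<le> r} = {}"
      using aT by auto
    then show ?thesis
      using step_filtrationD(3)[OF Zstep False] by (metis image_empty span_empty)
  qed
  then show ?thesis
    using that dus ius sa by blast
qed

lemma span_image_sum_repr:
  assumes "finite D" "inj_on g D" "x \<in> span (g ` D)"
  obtains e where "x = (\<Sum>q\<in>D. e q *s g q)"
proof -
  from assms(3) obtain u where "x = (\<Sum>v\<in>g ` D. u v *s v)"
    using span_finite[of "g ` D"] assms(1) by auto
  also have "\<dots> = (\<Sum>q\<in>D. u (g q) *s g q)"
    using sum.reindex[OF assms(2), of "\<lambda>v. u v *s v"] by simp
  finally show ?thesis
    by (rule that)
qed

lemma sum_in_span_disjoint_coeffs_zero:
  assumes indep: "independent (set ws)" and dist: "distinct ws"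
    and JD: "J \<subseteq> {..<length ws}" "D \<subseteq> {..<length ws}" "J \<inter> D = {}"
    and in_span: "(\<Sum>i\<in>J. c i *s (ws!i)) \<in> span ((!) ws ` D)"
    and iJ: "i \<in> J"
  shows "c i = 0"
proof -
  have finJD: "finite J" "finite D"
    using JD finite_subset[of _ "{..<length ws}"] by auto
  have inj: "inj_on ((!) ws) (J \<union> D)"
    using dist JD by (intro inj_on_nth) auto
  obtain e where eq: "(\<Sum>i\<in>J. c i *s (ws!i)) = (\<Sum>q\<in>D. e q *s (ws!q))"
    using span_image_sum_repr[OF finJD(2) inj_on_subset[OF inj] in_span] by blast
  define h where "h i = (if i \<in> J then c i else - e i)" for i
  have "(\<Sum>i\<in>J \<union> D. h i *s (ws!i)) = (\<Sum>i\<in>J. h i *s (ws!i)) + (\<Sum>i\<in>D. h i *s (ws!i))"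
    using finJD JD(3) by (simp add: sum.union_disjoint)
  also have "(\<Sum>i\<in>J. h i *s (ws!i)) = (\<Sum>i\<in>J. c i *s (ws!i))"
    by (rule sum.cong) (auto simp: h_def)
  also have "(\<Sum>i\<in>D. h i *s (ws!i)) = - (\<Sum>q\<in>D. e q *s (ws!q))"
    using JD(3) by (auto simp: h_def sum_negf[symmetric] intro!: sum.cong)
  finally have "(\<Sum>i\<in>J \<union> D. h i *s (ws!i)) = 0"
    using eq by simp
  then have z: "(\<Sum>v\<in>(!) ws ` (J \<union> D). h (the_inv_into (J \<union> D) ((!) ws) v) *s v) = 0"
    by (simp add: sum.reindex[OF inj] the_inv_into_f_f[OF inj])
  have "h (the_inv_into (J \<union> D) ((!) ws) (ws!i)) = 0"
    using finJD iJ JD by (intro independentD[OF indep _ _ z]) auto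
  then show ?thesis
    using iJ by (simp add: the_inv_into_f_f[OF inj] h_def)
qed

lemma sum_in_span_mod_subspace:
  assumes "subspace S" "finite P" "inj_on g P" "y \<in> span (g ` P)" "J \<subseteq> P"
    and "\<And>p. p \<in> P - J \<Longrightarrow> g p \<in> S"
  shows "\<exists>c. y - (\<Sum>i\<in>J. c i *s g i) \<in> S"
proof -
  obtain c where c: "y = (\<Sum>q\<in>P. c q *s g q)"
    using span_image_sum_repr[OF assms(2-4)] .
  have "y - (\<Sum>i\<in>J. c i *s g i) = (\<Sum>q\<in>P - J. c q *s g q)"
    unfolding c using sum.subset_diff[OF assms(5,2), of "\<lambda>q. c q *s g q"] by simp
  also have "\<dots> \<in> S"
    using assms(1,6) by (intro subspace_sum subspace_scale) auto
  finally show ?thesis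
    by blast
qed

lemma exists_interval_basis:
  fixes Z B :: "real \<Rightarrow> 'b set"
  assumes Zsub: "\<And>r. subspace (Z r)" and Zmono: "mono Z" and Zstep: "step_filtration T Z"
    and Bsub: "\<And>r. subspace (B r)" and Bmono: "mono B" and Bstep: "step_filtration T' B"
    and finF: "finite F" and Zspan: "\<And>r. Z r \<subseteq> span F"
  obtains I a and d :: "nat \<Rightarrow> ereal" and z where "finite I"
    "\<And>i. i \<in> I \<Longrightarrow> ereal (a i) < d i \<and> z i \<in> Z (a i)"
    "\<And>r i. i \<in> I \<Longrightarrow> d i \<le> ereal r \<Longrightarrow> z i \<in> B r"
    "\<And>r c. (\<Sum>i\<in>{i\<in>I. a i \<le> r \<and> ereal r < d i}. c i *s z i) \<in> B r
       \<Longrightarrow> \<forall>i\<in>{i\<in>I. a i \<le> r \<and> ereal r < d i}. c i = 0"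
    "\<And>r y. y \<in> Z r \<Longrightarrow> \<exists>c. y - (\<Sum>i\<in>{i\<in>I. a i \<le> r \<and> ereal r < d i}. c i *s z i) \<in> B r"
proof -
  obtain us a where dus: "distinct us" and ius: "independent (set us)"
    and sa: "\<And>p q. p \<le> q \<Longrightarrow> q < length us \<Longrightarrow> a p \<le> a q"
    and Zus: "\<And>r. Z r = span ((!) us ` {p. p < length us \<and> a p \<le> r})"
    using exists_basis_adapted_to_step_filtration[OF Zsub Zmono Zstep finF Zspan] by metis
  obtain ws and \<delta> :: "nat \<Rightarrow> ereal" where len: "length ws = length us" and dws: "distinct ws"
    and iws: "independent (set ws)"
    and tk: "\<forall>p \<le> length us. span (set (take p ws)) = span (set (take p us))"
    and dB: "\<forall>p<length us. \<forall>s. \<delta> p \<le> ereal s \<longrightarrow> ws!p \<in> B s"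
    and Bsp: "\<forall>s. B s \<inter> span (set us) \<subseteq> span ((!) ws ` {p. p < length us \<and> \<delta> p \<le> ereal s})"
    using exists_basis_adapted_to_death[OF Bsub Bmono Bstep ius dus] by blast
  \<comment> \<open>The levels are sorted, so the birth sets are initial segments and the flags of
     \<open>us\<close> and \<open>ws\<close> agree on them.\<close>
  have Zws: "Z r = span ((!) ws ` {p. p < length us \<and> a p \<le> r})" for r
  proof -
    define N where "N = card {p. p < length us \<and> a p \<le> r}"
    have "{p. p < length us \<and> a p \<le> r} = {..<N}"
      unfolding N_def using sa by (intro downward_closed_eq_lessThan) (auto intro: order_trans)
    moreover have "N \<le> length us"
      unfolding N_def by (rule order_trans[OF card_mono card_lessThan[THEN eq_imp_le]]) auto
    ultimately show ?thesis
      using Zus tk len by (simp add: nth_image lessThan_atLeast0)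
  qed
  define I where "I = {p. p < length us \<and> ereal (a p) < \<delta> p}"
  show ?thesis
  proof (rule that[of I a \<delta> "(!) ws"])
    show "finite I"
      by (simp add: I_def)
  next
    fix i assume "i \<in> I"
    then show "ereal (a i) < \<delta> i \<and> ws ! i \<in> Z (a i)"
      using Zws[of "a i"] by (auto simp: I_def intro!: span_base)
  next
    fix r i assume "i \<in> I" "\<delta> i \<le> ereal r"
    then show "ws ! i \<in> B r"
      using dB by (auto simp: I_def)
  next
    fix r c
    define J where "J = {i\<in>I. a i \<le> r \<and> ereal r < \<delta> i}"
    define D where "D = {p. p < length us \<and> \<delta> p \<le> ereal r}"
    assume "(\<Sum>i\<in>J. c i *s ws ! i) \<in> B r"
    moreover have "(\<Sum>i\<in>J. c i *s ws ! i) \<in> span (set ws)"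
      by (intro span_sum span_scale span_base) (auto simp: J_def I_def len)
    moreover have "span (set ws) = span (set us)"
      using tk len by auto
    ultimately have in_span: "(\<Sum>i\<in>J. c i *s ws ! i) \<in> span ((!) ws ` D)"
      using Bsp by (auto simp: D_def)
    show "\<forall>i\<in>J. c i = 0"
    proof
      fix i assume "i \<in> J"
      show "c i = 0"
        by (rule sum_in_span_disjoint_coeffs_zero[OF iws dws _ _ _ in_span \<open>i \<in> J\<close>])
          (auto simp: J_def I_def D_def len)
    qed
  next
    fix r y assume "y \<in> Z r"
    define P where "P = {p. p < length us \<and> a p \<le> r}"
    show "\<exists>c. y - (\<Sum>i\<in>{i\<in>I. a i \<le> r \<and> ereal r < \<delta> i}. c i *s ws ! i) \<in> B r"
    proof (rule sum_in_span_mod_subspace[OF Bsub, of P])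
      show "inj_on ((!) ws) P"
        using dws len by (intro inj_on_nth) (auto simp: P_def)
      show "y \<in> span ((!) ws ` P)"
        using \<open>y \<in> Z r\<close> Zws by (simp add: P_def)
      fix p assume "p \<in> P - {i\<in>I. a i \<le> r \<and> ereal r < \<delta> i}"
      then have "p < length us" "\<delta> p \<le> ereal r"
        by (auto simp: P_def I_def not_less intro: order_trans)
      then show "ws ! p \<in> B r"
        using dB by blast
    qed (auto simp: P_def I_def)
  qed
qed

end

section \<open>Interval decompositions\<close>

lemma sublevel_mono: "r \<le> s \<Longrightarrow> sublevel K f r \<subseteq> sublevel K f s"
  by (auto simp: sublevel_def)

lemma sublevel_subset: "sublevel K f r \<subseteq> K"
  by (auto simp: sublevel_def)

lemma mono_cycles_sublevel: "mono (\<lambda>r. cycles K (sublevel K f r) n)"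
  by (intro monoI cycles_mono sublevel_mono)

lemma mono_boundaries_sublevel: "mono (\<lambda>r. boundaries K (sublevel K f r) n)"
  by (intro monoI boundaries_mono sublevel_mono)

lemma step_filtration_sublevel:
  assumes "finite K" "\<Phi> {} = {0}"
  shows "step_filtration (f ` K) (\<lambda>r. \<Phi> (sublevel K f r))"
proof -
  have "sublevel K f r = sublevel K f (Max {t\<in>f ` K. t \<le> r})" if "\<exists>t\<in>f ` K. t \<le> r" for r
  proof -
    have fin: "finite {t\<in>f ` K. t \<le> r}"
      using assms(1) by simp
    have "Max {t\<in>f ` K. t \<le> r} \<le> r"
      using Max_in[OF fin] that by auto
    then show ?thesis
      using Max_ge[OF fin] by (auto simp: sublevel_def)
  qed
  moreover have "sublevel K f r = {}" if "\<not> (\<exists>t\<in>f ` K. t \<le> r)" for r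
    using that by (auto simp: sublevel_def)
  ultimately show ?thesis
    using assms by (simp add: step_filtration_def)
qed

lemma interval_decomp_exists:
  assumes finK: "finite (K :: ('v::linorder) set set)"
  shows "\<exists>I a d (z :: nat \<Rightarrow> 'v set \<Rightarrow> 'k::field). interval_decomp K f n I a d z"
proof -
  have "cycles K (sublevel K f r) n \<subseteq> V.span (elementary_chain ` K :: ('v set \<Rightarrow> 'k) set)" for r
    using chain_in_span_elementary_chains[OF finK sublevel_subset] by (auto simp: cycles_def)
  then show ?thesis
  proof (rule V.exists_interval_basis[OF cycles_subspace mono_cycles_sublevel
        step_filtration_sublevel[of K "\<lambda>L. cycles K L n", OF finK cycles_empty] boundaries_subspace
        mono_boundaries_sublevel step_filtration_sublevel[of K "\<lambda>L. boundaries K L n", OF finK boundaries_empty]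
        finite_imageI[OF finK]])
    fix I a d and z :: "nat \<Rightarrow> 'v set \<Rightarrow> 'k"
    assume "finite I"
      and "\<And>i. i \<in> I \<Longrightarrow> ereal (a i) < d i \<and> z i \<in> cycles K (sublevel K f (a i)) n"
      and "\<And>r i. i \<in> I \<Longrightarrow> d i \<le> ereal r \<Longrightarrow> z i \<in> boundaries K (sublevel K f r) n"
      and "\<And>r c. (\<Sum>i\<in>{i\<in>I. a i \<le> r \<and> ereal r < d i}. scale_fun (c i) (z i))
              \<in> boundaries K (sublevel K f r) n \<Longrightarrow> \<forall>i\<in>{i\<in>I. a i \<le> r \<and> ereal r < d i}. c i = 0"
      and "\<And>r y. y \<in> cycles K (sublevel K f r) n \<Longrightarrow> \<exists>c. y - (\<Sum>i\<in>{i\<in>I. a i \<le> r \<and> ereal r < d i}.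
              scale_fun (c i) (z i)) \<in> boundaries K (sublevel K f r) n"
    then have "interval_decomp K f n I a d z"
      unfolding interval_decomp_def Let_def lincomb_eq_sum by (intro conjI allI ballI impI) auto
    then show ?thesis
      by blast
  qed
qed

lemma barcode_decomp:
  fixes K :: "('v::linorder) set set"
  assumes "finite K"
  obtains I a d and z :: "nat \<Rightarrow> 'v set \<Rightarrow> 'k::field" where "interval_decomp K f n I a d z"
    "barcode TYPE('k) K f n = image_mset (\<lambda>i. (a i, d i)) (mset_set I)"
proof -
  let ?P = "\<lambda>B. \<exists>I a d (z :: nat \<Rightarrow> 'v set \<Rightarrow> 'k).
    interval_decomp K f n I a d z \<and> B = image_mset (\<lambda>i. (a i, d i)) (mset_set I)"
  have "\<exists>B. ?P B"
    using interval_decomp_exists[OF assms] by blast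
  then have "?P (barcode TYPE('k) K f n)"
    unfolding barcode_def by (rule someI_ex)
  then show ?thesis
    using that by blast
qed

lemma interval_decomp_independent:
  assumes dec: "interval_decomp K f n I a d z"
    and S: "S \<subseteq> {i\<in>I. a i \<le> r \<and> ereal r < d i}"
    and lc: "lincomb c S z \<in> boundaries K (sublevel K f r) n" and i: "i \<in> S"
  shows "c i = 0"
proof -
  define J where "J = {i\<in>I. a i \<le> r \<and> ereal r < d i}"
  have finJ: "finite J"
    using dec by (simp add: interval_decomp_def J_def)
  have indep: "\<And>c. lincomb c J z \<in> boundaries K (sublevel K f r) n \<Longrightarrow> \<forall>i\<in>J. c i = 0"
    using dec unfolding interval_decomp_def Let_def J_def by blast
  have "lincomb (\<lambda>i. if i \<in> S then c i else 0) J z = lincomb c S z"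
    unfolding lincomb_def
  proof
    fix \<sigma>
    show "(\<Sum>i\<in>J. (if i \<in> S then c i else 0) * z i \<sigma>) = (\<Sum>i\<in>S. c i * z i \<sigma>)"
      using S finJ by (intro sum.mono_neutral_cong_right) (auto simp: J_def)
  qed
  then have "lincomb (\<lambda>i. if i \<in> S then c i else 0) J z \<in> boundaries K (sublevel K f r) n"
    using lc by (simp only:)
  then have "\<forall>i\<in>J. (if i \<in> S then c i else 0) = 0"
    by (rule indep)
  then show ?thesis
    using S i by (auto simp: J_def)
qed

lemma interval_decomp_generator_boundary_iff:
  fixes z :: "nat \<Rightarrow> 'v::linorder set \<Rightarrow> 'k::field"
  assumes dec: "interval_decomp K f n I a d z" and i: "i \<in> I" "a i \<le> q"
  shows "z i \<in> boundaries K (sublevel K f q) n \<longleftrightarrow> d i \<le> ereal q"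
proof
  assume zq: "z i \<in> boundaries K (sublevel K f q) n"
  show "d i \<le> ereal q"
  proof (rule ccontr)
    assume "\<not> d i \<le> ereal q"
    then have "{i} \<subseteq> {i\<in>I. a i \<le> q \<and> ereal q < d i}"
      using i by auto
    moreover have "lincomb (\<lambda>_. 1) {i} z \<in> boundaries K (sublevel K f q) n"
      using zq by (simp add: lincomb_def)
    ultimately have "(1 :: 'k) = 0"
      using interval_decomp_independent[OF dec] by blast
    then show False
      by simp
  qed
qed (use dec i in \<open>auto simp: interval_decomp_def\<close>)

lemma ereal_finite_bounds_below:
  fixes d :: "'a \<Rightarrow> ereal"
  assumes "finite J" "\<And>i. i \<in> J \<Longrightarrow> d i < ereal T" "r < T"
  shows "\<exists>u. r \<le> u \<and> u < T \<and> (\<forall>i\<in>J. d i \<le> ereal u)"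
  using assms
proof (induction J rule: finite_induct)
  case empty
  then show ?case
    by auto
next
  case (insert x J)
  then obtain u where u: "r \<le> u" "u < T" "\<forall>i\<in>J. d i \<le> ereal u"
    by blast
  obtain t where "d x < ereal t" "t < T"
    using ereal_dense2[OF insert.prems(1)[OF insertI1]] by auto
  then show ?case
    using u by (intro exI[of _ "max u t"]) (auto simp: le_max_iff_disj intro: order_trans)
qed

lemma interval_decomp_cycle_mod_generator:
  assumes dec: "interval_decomp K f n I a d z"
    and i0: "i0 \<in> I" "a i0 \<le> r" "ereal r < d i0" and rT: "r < T"
    and others: "\<And>i. i \<in> I \<Longrightarrow> i \<noteq> i0 \<Longrightarrow> a i \<le> r \<Longrightarrow> ereal r < d i \<Longrightarrow> d i < ereal T"
  obtains u where "r \<le> u" "u < T"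
    "\<And>y. y \<in> cycles K (sublevel K f r) n \<Longrightarrow>
       \<exists>x. y - scale_fun x (z i0) \<in> boundaries K (sublevel K f u) n"
proof -
  define J where "J = {i\<in>I. a i \<le> r \<and> ereal r < d i}"
  have finJ: "finite J" and i0J: "i0 \<in> J"
    using dec i0 by (simp_all add: interval_decomp_def J_def)
  obtain u where u: "r \<le> u" "u < T" "\<forall>i\<in>J - {i0}. d i \<le> ereal u"
    using ereal_finite_bounds_below[of "J - {i0}" d T r] finJ others rT by (auto simp: J_def)
  have "\<exists>x. y - scale_fun x (z i0) \<in> boundaries K (sublevel K f u) n"
    if y: "y \<in> cycles K (sublevel K f r) n" for y
  proof -
    obtain c where c: "y - lincomb c J z \<in> boundaries K (sublevel K f r) n"
      using dec y unfolding interval_decomp_def Let_def J_def by blast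
    have "y - scale_fun (c i0) (z i0) = (y - lincomb c J z) + lincomb c (J - {i0}) z"
      using lincomb_remove[OF finJ i0J, of c z] by (simp add: algebra_simps)
    also have "\<dots> \<in> boundaries K (sublevel K f u) n"
    proof (rule V.subspace_add[OF boundaries_subspace])
      show "y - lincomb c J z \<in> boundaries K (sublevel K f u) n"
        using c boundaries_mono[OF sublevel_mono[OF u(1)]] by blast
      show "lincomb c (J - {i0}) z \<in> boundaries K (sublevel K f u) n"
        using dec u(3) by (intro lincomb_in_subspace[OF boundaries_subspace])
          (auto simp: interval_decomp_def J_def)
    qed
    finally show ?thesis
      by blast
  qed
  then show ?thesis
    using that u by blast
qed

lemma interval_decomp_boundary_iff_single_bar:
  fixes z :: "nat \<Rightarrow> 'v::linorder set \<Rightarrow> 'k::field" and y :: "'v set \<Rightarrow> 'k"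
  assumes dec: "interval_decomp K f n I a d z"
    and j: "j \<in> I" "a j \<le> r" "d j = ereal v" and rT: "r < T" "T \<le> v"
    and others: "\<And>i. i \<in> I \<Longrightarrow> i \<noteq> j \<Longrightarrow> a i \<le> r \<Longrightarrow> ereal r < d i \<Longrightarrow> d i < ereal T"
    and y: "y \<in> cycles K (sublevel K f r) n"
    and y_below: "\<And>q. q < T \<Longrightarrow> y \<notin> boundaries K (sublevel K f q) n"
    and q: "r \<le> q"
  shows "y \<in> boundaries K (sublevel K f q) n \<longleftrightarrow> v \<le> q"
proof (cases "q < T")
  case True
  then show ?thesis
    using y_below[OF True] rT(2) by simp
next
  case False
  let ?B = "boundaries K (sublevel K f q) n"
  have "ereal r < d j"
    using j(3) rT by simp
  then obtain u where u: "r \<le> u" "u < T" "\<And>w. w \<in> cycles K (sublevel K f r) n \<Longrightarrow>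
      \<exists>x. w - scale_fun x (z j) \<in> boundaries K (sublevel K f u) n"
    using interval_decomp_cycle_mod_generator[OF dec j(1,2) _ rT(1) others] by blast
  then obtain x where x: "y - scale_fun x (z j) \<in> boundaries K (sublevel K f u) n"
    using y by blast
  have "x \<noteq> 0"
  proof
    assume "x = 0"
    then have "scale_fun x (z j) = 0"
      by (simp add: fun_eq_iff)
    then have "y \<in> boundaries K (sublevel K f u) n"
      using x by (metis diff_zero)
    then show False
      using y_below[OF u(2)] by blast
  qed
  have yx: "y - scale_fun x (z j) \<in> ?B"
  proof -
    have "u \<le> q"
      using u(2) False by simp
    then show ?thesis
      using x boundaries_mono[OF sublevel_mono] by blast
  qed
  have "y \<in> ?B \<longleftrightarrow> scale_fun x (z j) \<in> ?B"
    by (rule V.subspace_diff_mem_iff[OF boundaries_subspace yx])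
  also have "\<dots> \<longleftrightarrow> z j \<in> ?B"
    by (rule V.subspace_scale_mem_iff[OF boundaries_subspace \<open>x \<noteq> 0\<close>])
  also have "\<dots> \<longleftrightarrow> v \<le> q"
    using interval_decomp_generator_boundary_iff[OF dec j(1)] j q by simp
  finally show ?thesis .
qed

lemma strict_sublevel_eq_sublevel_below:
  assumes "finite K"
  obtains q where "q < b" "strict_sublevel K f b = sublevel K f q"
proof (cases "{\<tau>\<in>K. f \<tau> < b} = {}")
  case True
  then show ?thesis
    by (intro that[of "b - 1"]) (auto simp: strict_sublevel_def sublevel_def)
next
  case False
  let ?q = "Max (f ` {\<tau>\<in>K. f \<tau> < b})"
  have "?q \<in> f ` {\<tau>\<in>K. f \<tau> < b}"
    using False assms by (intro Max_in) auto
  moreover have "f \<tau> \<le> ?q" if "\<tau> \<in> K" "f \<tau> < b" for \<tau>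
    using that assms by (intro Max_ge) auto
  ultimately show ?thesis
    by (intro that[of ?q]) (force simp: strict_sublevel_def sublevel_def)+
qed

lemma sublevel_eq_strict_sublevel_above:
  assumes "finite K"
  obtains q where "b < q" "sublevel K f b = strict_sublevel K f q"
proof (cases "{\<tau>\<in>K. b < f \<tau>} = {}")
  case True
  then show ?thesis
    by (intro that[of "b + 1"]) (auto simp: strict_sublevel_def sublevel_def)
next
  case False
  let ?q = "Min (f ` {\<tau>\<in>K. b < f \<tau>})"
  have "?q \<in> f ` {\<tau>\<in>K. b < f \<tau>}"
    using False assms by (intro Min_in) auto
  moreover have "?q \<le> f \<tau>" if "\<tau> \<in> K" "b < f \<tau>" for \<tau>
    using that assms by (intro Min_le) auto
  ultimately show ?thesis
    by (intro that[of ?q]) (force simp: strict_sublevel_def sublevel_def not_le)+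
qed

lemma termination_scale_not_boundary_below:
  assumes "termination_scale K f n a \<alpha> = ereal b" "a < b" "q < b"
  shows "\<alpha> \<notin> boundaries K (sublevel K f q) n"
proof
  assume "\<alpha> \<in> boundaries K (sublevel K f q) n"
  then have "\<alpha> \<in> boundaries K (sublevel K f (max a q)) n"
    using boundaries_mono[OF sublevel_mono[OF max.cobounded2]] by blast
  then have "termination_scale K f n a \<alpha> \<le> ereal (max a q)"
    unfolding termination_scale_def by (intro Inf_lower CollectI exI[of _ "max a q"]) simp
  then show False
    using assms by (auto simp: max_def split: if_splits)
qed

lemma termination_scale_boundary:
  assumes "finite K" "termination_scale K f n a \<alpha> = ereal b"
  shows "\<alpha> \<in> boundaries K (sublevel K f b) n"
proof -
  obtain q where q: "b < q" "sublevel K f b = strict_sublevel K f q"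
    using sublevel_eq_strict_sublevel_above[OF assms(1)] .
  then have "Inf {ereal q' | q'. a \<le> q' \<and> \<alpha> \<in> boundaries K (sublevel K f q') n} < ereal q"
    using assms(2) by (simp add: termination_scale_def)
  then obtain q' where "q' < q" "\<alpha> \<in> boundaries K (sublevel K f q') n"
    unfolding Inf_less_iff by auto
  moreover have "sublevel K f q' \<subseteq> strict_sublevel K f q"
    using \<open>q' < q\<close> by (auto simp: sublevel_def strict_sublevel_def)
  then have "sublevel K f q' \<subseteq> sublevel K f b"
    using q(2) by simp
  ultimately show ?thesis
    using boundaries_mono by blast
qed

lemma termination_value_attained:
  assumes "finite K" "termination_scale K f n a \<alpha> = ereal b" "a < b"
  shows "\<exists>\<sigma>\<in>K. f \<sigma> = b"
proof (rule ccontr)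
  assume "\<not> (\<exists>\<sigma>\<in>K. f \<sigma> = b)"
  then have "sublevel K f b = strict_sublevel K f b"
    by (auto simp: sublevel_def strict_sublevel_def)
  moreover obtain q where "q < b" "strict_sublevel K f b = sublevel K f q"
    using strict_sublevel_eq_sublevel_below[OF assms(1)] .
  ultimately show False
    using termination_scale_boundary[OF assms(1,2)] termination_scale_not_boundary_below[OF assms(2,3)]
    by metis
qed

lemma termination_scale_eqI:
  assumes "r \<le> v" "\<And>q. r \<le> q \<Longrightarrow> \<alpha> \<in> boundaries K (sublevel K f q) n \<longleftrightarrow> v \<le> q"
  shows "termination_scale K f n r \<alpha> = ereal v"
proof -
  have "{ereal q | q. r \<le> q \<and> \<alpha> \<in> boundaries K (sublevel K f q) n} = {ereal q | q. v \<le> q}"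
    using assms by (auto intro: order_trans)
  moreover have "Inf {ereal q | q. v \<le> q} = ereal v"
    by (rule antisym) (auto intro: Inf_lower Inf_greatest)
  ultimately show ?thesis
    by (simp add: termination_scale_def)
qed

section \<open>Birth and terminal simplices\<close>

lemma filtration_proper_face_less:
  assumes "filtration K f" "inj_on f K" "\<tau> \<in> K" "\<rho> \<in> K" "\<tau> \<subseteq> \<rho>" "\<tau> \<noteq> \<rho>"
  shows "f \<tau> < f \<rho>"
  using assms unfolding filtration_def inj_on_def by (metis order_le_imp_less_or_eq)

lemma bd_at_sublevel_top:
  assumes "filtration K f" "inj_on f K" "m \<in> K" "chain (sublevel K f (f m)) d e"
  shows "bd K e m = 0"
proof -
  have "e \<rho> = 0" if "\<rho> \<in> K" "m \<subseteq> \<rho>" "card \<rho> = Suc (card m)" for \<rho>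
  proof (rule ccontr)
    assume "e \<rho> \<noteq> 0"
    then have "f \<rho> \<le> f m"
      using assms(4) by (auto simp: chain_def sublevel_def)
    moreover have "f m < f \<rho>"
      using that assms(1-3) by (intro filtration_proper_face_less) auto
    ultimately show False
      by simp
  qed
  then show ?thesis
    by (simp add: bd_def)
qed

text \<open>No chain at level \<open>f m\<close> has \<open>m\<close> in its boundary, since every coface of \<open>m\<close> enters later
  (\<open>bd_at_sublevel_top\<close>). So every cycle homologous to \<open>c\<close> at that level has the same nonzero
  coefficient at \<open>m\<close> and cannot have entered before \<open>m\<close>.\<close>

lemma birth_simplexI:
  fixes c :: "'v::linorder set \<Rightarrow> 'k::field"
  assumes filt: "filtration K f" and inj: "inj_on f K" and m: "m \<in> K"
    and c: "c \<in> cycles K (sublevel K f (f m)) (card m - 1)" "c m \<noteq> 0"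
  shows "birth_simplex TYPE('k) K f m"
  unfolding birth_simplex_def
proof (intro conjI bexI ballI m)
  fix w :: "'v set \<Rightarrow> 'k" assume w: "w \<in> cycles K (strict_sublevel K f (f m)) (card m - 1)"
  show "c - w \<notin> boundaries K (sublevel K f (f m)) (card m - 1)"
  proof
    assume "c - w \<in> boundaries K (sublevel K f (f m)) (card m - 1)"
    then obtain e where "c - w = bd K e" "chain (sublevel K f (f m)) (Suc (card m - 1)) e"
      by (auto simp: boundaries_def)
    moreover have "w m = 0"
      using w by (auto simp: cycles_def chain_def strict_sublevel_def)
    ultimately have "c m = 0"
      using bd_at_sublevel_top[OF filt inj m] by (metis diff_zero minus_apply)
    then show False
      using c(2) by simp
  qed
qed (fact c(1))

lemma birth_simplex_above_boundary:
  fixes c c0 :: "'v::linorder set \<Rightarrow> 'k::field"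
  assumes filt: "filtration K f" and inj: "inj_on f K" and finK: "finite K"
    and c0: "chain (sublevel K f b) (Suc n) c0" and c: "chain K (Suc n) c"
    and bd_eq: "bd K c = bd K c0" and above: "c \<tau> \<noteq> 0" "b < f \<tau>"
  obtains m where "c m \<noteq> 0" "b < f m" "card m = n + 2" "birth_simplex TYPE('k) K f m"
proof -
  define S where "S = {\<tau>. c \<tau> \<noteq> 0}"
  have "S \<subseteq> K" "\<tau> \<in> S"
    using c above by (auto simp: S_def chain_def)
  then have finS: "finite S" "f ` S \<noteq> {}"
    using finK finite_subset by auto
  then obtain m where "m \<in> S" "f m = Max (f ` S)"
    using Max_in by (metis imageE finite_imageI)
  then have m: "m \<in> S" "\<And>\<tau>. \<tau> \<in> S \<Longrightarrow> f \<tau> \<le> f m"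
    using finS by simp_all
  have mK: "m \<in> K" "card m = Suc (Suc n)" and "b < f m"
    using m c above by (auto simp: S_def chain_def intro: less_le_trans)
  have "c - c0 \<in> cycles K (sublevel K f (f m)) (card m - 1)"
  proof -
    have "chain (sublevel K f (f m)) (Suc n) c"
      using c m by (auto simp: chain_def sublevel_def S_def)
    moreover have "chain (sublevel K f (f m)) (Suc n) c0"
      using \<open>b < f m\<close> by (intro chain_mono[OF _ c0]) (auto simp: sublevel_def)
    ultimately show ?thesis
      using mK bd_eq by (simp add: cycles_def chain_diff bd_diff)
  qed
  moreover have "(c - c0) m \<noteq> 0"
    using m \<open>b < f m\<close> c0 by (auto simp: S_def chain_def sublevel_def)
  ultimately have "birth_simplex TYPE('k) K f m"
    by (rule birth_simplexI[OF filt inj mK(1)])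
  then show ?thesis
    using that m \<open>b < f m\<close> mK by (simp add: S_def)
qed

lemma bd_elementary_chain_in_cycles:
  assumes K: "simplicial_complex K" and filt: "filtration K f" and inj: "inj_on f K"
    and \<rho>: "\<rho> \<in> K" "card \<rho> = Suc (Suc n)"
  shows "bd K (elementary_chain \<rho>) \<in> (cycles K (strict_sublevel K f (f \<rho>)) n :: ('v::linorder set \<Rightarrow> 'k::field) set)"
  unfolding cycles_def
proof (intro CollectI conjI)
  show "bd K (bd K (elementary_chain \<rho>)) = (0 :: 'v set \<Rightarrow> 'k)"
    by (rule bd_bd[OF K])
  show "chain (strict_sublevel K f (f \<rho>)) n (bd K (elementary_chain \<rho> :: 'v set \<Rightarrow> 'k))"
    unfolding chain_def
  proof (intro allI impI)
    fix \<tau> assume nz: "bd K (elementary_chain \<rho> :: 'v set \<Rightarrow> 'k) \<tau> \<noteq> 0"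
    then have "\<tau> \<noteq> {}"
      by (auto simp: bd_def)
    then have "(\<Sum>\<sigma>\<in>{\<sigma>\<in>K. \<tau> \<subseteq> \<sigma> \<and> card \<sigma> = Suc (card \<tau>)}. face_sign \<sigma> \<tau> * (elementary_chain \<rho> :: 'v set \<Rightarrow> 'k) \<sigma>) \<noteq> 0"
      using nz by (simp add: bd_def)
    then obtain \<sigma> where "\<sigma> \<in> {\<sigma>\<in>K. \<tau> \<subseteq> \<sigma> \<and> card \<sigma> = Suc (card \<tau>)}"
      "face_sign \<sigma> \<tau> * (elementary_chain \<rho> :: 'v set \<Rightarrow> 'k) \<sigma> \<noteq> 0"
      by (meson sum.not_neutral_contains_not_neutral)
    then have \<tau>: "\<tau> \<noteq> {}" "\<tau> \<subseteq> \<rho>" "card \<rho> = Suc (card \<tau>)"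
      using \<open>\<tau> \<noteq> {}\<close> by (auto simp: elementary_chain_def split: if_splits)
    then have "\<tau> \<in> K" "\<tau> \<noteq> \<rho>"
      using face_closed[OF K \<rho>(1)] by auto
    then have "f \<tau> < f \<rho>"
      using filtration_proper_face_less[OF filt inj _ \<rho>(1)] \<tau>(2) by blast
    then show "\<tau> \<in> strict_sublevel K f (f \<rho>) \<and> card \<tau> = Suc n"
      using \<open>\<tau> \<in> K\<close> \<tau>(3) \<rho>(2) by (simp add: strict_sublevel_def)
  qed
qed

lemma bd_nonterminal_in_boundaries:
  assumes K: "simplicial_complex K" and filt: "filtration K f" and inj: "inj_on f K"
    and \<rho>: "\<rho> \<in> K" "card \<rho> = Suc (Suc n)" "\<not> terminal_simplex TYPE('k) K f \<rho>"
  shows "bd K (elementary_chain \<rho>)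
    \<in> (boundaries K (strict_sublevel K f (f \<rho>)) n :: ('v::linorder set \<Rightarrow> 'k::field) set)"
proof -
  have "bd K (elementary_chain \<rho>) \<in> (cycles K (strict_sublevel K f (f \<rho>)) n :: ('v set \<Rightarrow> 'k) set)"
    by (rule bd_elementary_chain_in_cycles[OF K filt inj \<rho>(1,2)])
  moreover have "bd K (elementary_chain \<rho>) \<in> (boundaries K (sublevel K f (f \<rho>)) n :: ('v set \<Rightarrow> 'k) set)"
    using \<rho> by (auto simp: boundaries_def sublevel_def intro: chain_elementary_chain)
  ultimately show ?thesis
    using \<rho> by (auto simp: terminal_simplex_def)
qed

lemma boundaries_subset_subspaceI:
  assumes "finite K" "L \<subseteq> K" "V.subspace S"
    and "\<And>\<tau>. \<tau> \<in> L \<Longrightarrow> card \<tau> = Suc (Suc n) \<Longrightarrow> bd K (elementary_chain \<tau>) \<in> S"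
  shows "boundaries K L n \<subseteq> (S :: ('v::linorder set \<Rightarrow> 'k::field) set)"
proof
  fix \<alpha> :: "'v set \<Rightarrow> 'k" assume "\<alpha> \<in> boundaries K L n"
  then obtain c where c: "\<alpha> = bd K c" "chain L (Suc n) c"
    by (auto simp: boundaries_def)
  have "bd K c \<in> S"
    by (rule bd_chain_in_subspace[OF assms(1,2) c(2) assms(3)]) (use c(2) assms(4) in \<open>auto simp: chain_def\<close>)
  then show "\<alpha> \<in> S"
    using c(1) by simp
qed

text \<open>The boundary of a simplex that is not terminal was already a boundary before the simplex
  entered, so by induction along the filtration only terminal simplices contribute new
  boundaries.\<close>

lemma boundaries_sublevel_subset_of_terminal:
  fixes S :: "('v::linorder set \<Rightarrow> 'k::field) set"
  assumes K: "simplicial_complex K" and filt: "filtration K f" and inj: "inj_on f K"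
    and S: "V.subspace S"
    and terminal: "\<And>\<rho>. terminal_simplex TYPE('k) K f \<rho> \<Longrightarrow> card \<rho> = n + 2 \<Longrightarrow> f \<rho> \<le> b
      \<Longrightarrow> bd K (elementary_chain \<rho>) \<in> S"
  shows "boundaries K (sublevel K f b) n \<subseteq> S"
proof -
  have finK: "finite K"
    using simplicial_complex_finite[OF K] .
  have "bd K (elementary_chain \<rho>) \<in> S" if "\<rho> \<in> K" "card \<rho> = Suc (Suc n)" "f \<rho> \<le> b" for \<rho>
    using that
  proof (induction "card {x\<in>K. f x < f \<rho>}" arbitrary: \<rho> rule: less_induct)
    case less
    show ?case
    proof (cases "terminal_simplex TYPE('k) K f \<rho>")
      case True
      then show ?thesis
        using terminal less.prems by simp
    next
      case False
      have "boundaries K (strict_sublevel K f (f \<rho>)) n \<subseteq> S"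
      proof (rule boundaries_subset_subspaceI[OF finK _ S])
        fix \<tau> assume \<tau>: "\<tau> \<in> strict_sublevel K f (f \<rho>)" "card \<tau> = Suc (Suc n)"
        then have "card {x\<in>K. f x < f \<tau>} < card {x\<in>K. f x < f \<rho>}"
          using finK by (intro psubset_card_mono) (auto simp: strict_sublevel_def)
        then show "bd K (elementary_chain \<tau>) \<in> S"
          using less.hyps \<tau> less.prems(3) by (simp add: strict_sublevel_def)
      qed (auto simp: strict_sublevel_def)
      then show ?thesis
        using bd_nonterminal_in_boundaries[OF K filt inj less.prems(1,2) False] by blast
    qed
  qed
  then show ?thesis
    using boundaries_subset_subspaceI[OF finK sublevel_subset S] by (auto simp: sublevel_def)
qed

section \<open>Perturbation of the filtration\<close>

lemma sublevel_shift: "sup_norm_le K f g e \<Longrightarrow> sublevel K f q \<subseteq> sublevel K g (q + e)"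
  by (auto simp: sublevel_def sup_norm_le_def abs_le_iff)

lemma sup_norm_le_sym: "sup_norm_le K f g e \<Longrightarrow> sup_norm_le K g f e"
  by (auto simp: sup_norm_le_def abs_minus_commute)

lemma cycles_shift:
  "sup_norm_le K f g e \<Longrightarrow> cycles K (sublevel K f q) n \<subseteq> cycles K (sublevel K g (q + e)) n"
  by (intro cycles_mono sublevel_shift)

lemma boundaries_shift:
  "sup_norm_le K f g e \<Longrightarrow> boundaries K (sublevel K f q) n \<subseteq> boundaries K (sublevel K g (q + e)) n"
  by (intro boundaries_mono sublevel_shift)

text \<open>Two \<open>g\<close>-bars over \<open>[p, q]\<close> would give two \<open>f\<close>-cycles at level \<open>p + \<epsilon>\<close>. Modulo
  \<open>f\<close>-boundaries below \<open>q - \<epsilon>\<close> both are multiples of the generator of the only long \<open>f\<close>-bar,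
  so a nontrivial combination of them is a \<open>g\<close>-boundary before either \<open>g\<close>-bar ends.\<close>

lemma unique_long_bar:
  fixes zf zg :: "nat \<Rightarrow> 'v::linorder set \<Rightarrow> 'k::field"
  assumes decf: "interval_decomp K f n I af df zf" and decg: "interval_decomp K g n J ag dg zg"
    and fg: "sup_norm_le K f g \<epsilon>" and eps: "0 \<le> \<epsilon>"
    and i0: "i0 \<in> I" "af i0 \<le> p + \<epsilon>" "ereal (p + \<epsilon>) < df i0" and gap: "p + \<epsilon> < q - \<epsilon>"
    and others: "\<And>i. i \<in> I \<Longrightarrow> i \<noteq> i0 \<Longrightarrow> af i \<le> p + \<epsilon> \<Longrightarrow> ereal (p + \<epsilon>) < df i
      \<Longrightarrow> df i < ereal (q - \<epsilon>)"
    and k: "k \<in> J" "ag k \<le> p" "ereal q \<le> dg k"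
    and j: "j \<in> J" "ag j \<le> p" "ereal q \<le> dg j"
  shows "k = j"
proof (rule ccontr)
  assume "k \<noteq> j"
  obtain u where u: "p + \<epsilon> \<le> u" "u < q - \<epsilon>"
    and modgen: "\<And>y. y \<in> cycles K (sublevel K f (p + \<epsilon>)) n \<Longrightarrow>
       \<exists>x. y - scale_fun x (zf i0) \<in> boundaries K (sublevel K f u) n"
    using interval_decomp_cycle_mod_generator[OF decf i0 gap others] by blast
  have "zg i \<in> cycles K (sublevel K f (p + \<epsilon>)) n" if "i \<in> J" "ag i \<le> p" for i
  proof -
    have "zg i \<in> cycles K (sublevel K f (ag i + \<epsilon>)) n"
      using decg that cycles_shift[OF sup_norm_le_sym[OF fg]] by (auto simp: interval_decomp_def)
    then show ?thesis
      using cycles_mono[OF sublevel_mono] that(2) by (meson add_right_mono subsetD)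
  qed
  then obtain x1 x2 where
    x1: "zg k - scale_fun x1 (zf i0) \<in> boundaries K (sublevel K f u) n" and
    x2: "zg j - scale_fun x2 (zf i0) \<in> boundaries K (sublevel K f u) n"
    using modgen k j by meson
  define t where "t = u + \<epsilon>"
  have Bft: "boundaries K (sublevel K f u) n \<subseteq> boundaries K (sublevel K g t) n"
    unfolding t_def by (rule boundaries_shift[OF fg])
  have "scale_fun x2 (zg k) - scale_fun x1 (zg j)
      = scale_fun x2 (zg k - scale_fun x1 (zf i0)) - scale_fun x1 (zg j - scale_fun x2 (zf i0))"
    by (simp add: fun_eq_iff algebra_simps)
  also have "\<dots> \<in> boundaries K (sublevel K f u) n"
    by (rule V.subspace_diff[OF boundaries_subspace V.subspace_scale[OF boundaries_subspace x1]
          V.subspace_scale[OF boundaries_subspace x2]])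
  finally have comb: "lincomb (\<lambda>i. if i = k then x2 else - x1) {k, j} zg \<in> boundaries K (sublevel K g t) n"
    using Bft \<open>k \<noteq> j\<close> by (auto simp: lincomb_eq_sum fun_eq_iff)
  have "p \<le> t" and tq: "ereal t < ereal q"
    using u eps by (simp_all add: t_def)
  then have alive: "{k, j} \<subseteq> {i\<in>J. ag i \<le> t \<and> ereal t < dg i}"
    using k j less_le_trans[OF tq k(3)] less_le_trans[OF tq j(3)] by auto
  note indep = interval_decomp_independent[OF decg alive comb]
  have "x2 = 0" "x1 = 0"
    using indep[of k] indep[of j] \<open>k \<noteq> j\<close> by auto
  then have "zg k \<in> boundaries K (sublevel K g t) n"
    using x1 Bft by (auto simp: fun_eq_iff)
  then show False
    using interval_decomp_generator_boundary_iff[OF decg k(1)] alive k(2) by auto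
qed

lemma matched_bar_boundary_iff:
  fixes zf zg :: "nat \<Rightarrow> 'v::linorder set \<Rightarrow> 'k::field" and \<alpha> :: "'v set \<Rightarrow> 'k"
  assumes decf: "interval_decomp K f n I af df zf" and decg: "interval_decomp K g n J ag dg zg"
    and fg: "sup_norm_le K f g \<epsilon>"
    and i0: "i0 \<in> I" "af i0 = a" "df i0 = ereal b" and ab: "a + 4 * \<epsilon> < b"
    and others: "\<And>i. i \<in> I \<Longrightarrow> i \<noteq> i0 \<Longrightarrow> a + 2 * \<epsilon> < af i \<or> df i < ereal (b - 2 * \<epsilon>)"
    and j: "j \<in> J" "\<bar>a - ag j\<bar> \<le> \<epsilon>" "dg j = ereal v" "\<bar>b - v\<bar> \<le> \<epsilon>"
    and \<alpha>: "\<alpha> \<in> cycles K (sublevel K f a) n" "termination_scale K f n a \<alpha> = ereal b"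
    and q: "a + \<epsilon> \<le> q"
  shows "\<alpha> \<in> boundaries K (sublevel K g q) n \<longleftrightarrow> v \<le> q"
proof -
  have eps: "0 \<le> \<epsilon>" "ag j \<le> a + \<epsilon>" "b - \<epsilon> \<le> v"
    using j by (auto simp: abs_le_iff)
  have \<alpha>_below: "\<alpha> \<notin> boundaries K (sublevel K g q') n" if "q' < b - \<epsilon>" for q'
    using boundaries_shift[OF sup_norm_le_sym[OF fg], of q' n]
      termination_scale_not_boundary_below[OF \<alpha>(2), of "q' + \<epsilon>"] that ab eps(1) by auto
  have unique: "dg i < ereal (b - \<epsilon>)"
    if "i \<in> J" "i \<noteq> j" "ag i \<le> a + \<epsilon>" "ereal (a + \<epsilon>) < dg i" for i
  proof (rule ccontr)
    assume "\<not> dg i < ereal (b - \<epsilon>)"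
    then have "i = j"
      using unique_long_bar[OF decf decg fg eps(1) i0(1), of "a + \<epsilon>" "b - \<epsilon>" i j] i0 ab eps
        others that j(1,3) by (force simp: not_less)
    then show False
      using that(2) by simp
  qed
  have "\<alpha> \<in> cycles K (sublevel K g (a + \<epsilon>)) n"
    using cycles_shift[OF fg] \<alpha>(1) by blast
  then show ?thesis
    using interval_decomp_boundary_iff_single_bar[OF decg j(1) eps(2) j(3) _ eps(3) unique _ \<alpha>_below q]
      ab eps(1) by fastforce
qed

text \<open>A \<open>g\<close>-chain bounding \<open>\<alpha>\<close> below \<open>g \<sigma>\<close> avoids \<open>\<sigma>\<close>; if it reached above \<open>b\<close> in \<open>f\<close>, its
  top simplex would be a birth simplex within \<open>2 \<epsilon>\<close> of \<open>b\<close>.\<close>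

lemma not_boundary_below_terminal_value:
  fixes \<alpha> :: "'v::linorder set \<Rightarrow> 'k::field"
  assumes K: "simplicial_complex K" and filt: "filtration K f" and inj: "inj_on f K"
    and fg: "sup_norm_le K f g \<epsilon>" and \<sigma>: "\<sigma> \<in> K" "f \<sigma> = b"
    and bdry: "\<alpha> \<in> boundaries K (sublevel K f b) n"
    and below: "\<And>q. q < b \<Longrightarrow> \<alpha> \<notin> boundaries K (sublevel K f q) n"
    and birth_gap: "\<And>\<tau>. birth_simplex TYPE('k) K f \<tau> \<Longrightarrow> card \<tau> = n + 2 \<Longrightarrow> b < f \<tau>
      \<Longrightarrow> 2 * \<epsilon> \<le> f \<tau> - b"
    and q: "q < g \<sigma>"
  shows "\<alpha> \<notin> boundaries K (sublevel K g q) n"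
proof
  assume "\<alpha> \<in> boundaries K (sublevel K g q) n"
  then obtain c where c: "\<alpha> = bd K c" "chain (sublevel K g q) (Suc n) c"
    by (auto simp: boundaries_def)
  obtain c0 where c0: "\<alpha> = bd K c0" "chain (sublevel K f b) (Suc n) c0"
    using bdry by (auto simp: boundaries_def)
  have finK: "finite K"
    using simplicial_complex_finite[OF K] .
  have supp: "\<tau> \<in> K" "g \<tau> \<le> q" if "c \<tau> \<noteq> 0" for \<tau>
    using c(2) that by (auto simp: chain_def sublevel_def)
  show False
  proof (cases "\<exists>\<tau>. c \<tau> \<noteq> 0 \<and> b < f \<tau>")
    case True
    then obtain \<tau> where "c \<tau> \<noteq> 0" "b < f \<tau>"
      by blast
    then obtain m where m: "c m \<noteq> 0" "b < f m" "card m = n + 2" "birth_simplex TYPE('k) K f m"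
      using birth_simplex_above_boundary[OF filt inj finK c0(2) chain_mono[OF sublevel_subset c(2)]]
        c0(1) c(1) by metis
    then have "b + \<epsilon> \<le> g m"
      using birth_gap fg supp(1)[OF m(1)] by (force simp: sup_norm_le_def abs_le_iff)
    moreover have "g \<sigma> \<le> b + \<epsilon>"
      using fg \<sigma> by (auto simp: sup_norm_le_def abs_le_iff)
    ultimately show False
      using supp(2)[OF m(1)] q by simp
  next
    case False
    have "f \<tau> < b" if "c \<tau> \<noteq> 0" for \<tau>
    proof -
      have "\<tau> \<noteq> \<sigma>"
        using supp(2)[OF that] q by auto
      then have "f \<tau> \<noteq> b"
        using inj \<sigma> supp(1)[OF that] by (auto dest: inj_onD)
      then show ?thesis
        using False that by force
    qed
    moreover obtain q' where "q' < b" "strict_sublevel K f b = sublevel K f q'"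
      using strict_sublevel_eq_sublevel_below[OF finK] .
    ultimately have "chain (sublevel K f q') (Suc n) c"
      using c(2) by (auto simp: chain_def sublevel_def strict_sublevel_def)
    then show False
      using below[OF \<open>q' < b\<close>] c(1) by (auto simp: boundaries_def)
  qed
qed

lemma boundaries_sublevel_subset_at_terminal_value:
  fixes \<alpha> :: "'v::linorder set \<Rightarrow> 'k::field"
  assumes K: "simplicial_complex K" and filt: "filtration K f" and inj: "inj_on f K"
    and fg: "sup_norm_le K f g \<epsilon>" and \<sigma>: "\<sigma> \<in> K" "f \<sigma> = b"
    and terminal_gap: "\<And>\<tau>. terminal_simplex TYPE('k) K f \<tau> \<Longrightarrow> card \<tau> = n + 2 \<Longrightarrow> f \<tau> < b
      \<Longrightarrow> 2 * \<epsilon> \<le> b - f \<tau>"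
  shows "boundaries K (sublevel K f b) n \<subseteq> (boundaries K (sublevel K g (g \<sigma>)) n :: ('v set \<Rightarrow> 'k) set)"
proof (rule boundaries_sublevel_subset_of_terminal[OF K filt inj boundaries_subspace])
  fix \<rho> assume \<rho>: "terminal_simplex TYPE('k) K f \<rho>" "card \<rho> = n + 2" "f \<rho> \<le> b"
  have "g \<rho> \<le> g \<sigma>"
  proof (cases "\<rho> = \<sigma>")
    case False
    then have "f \<rho> < b"
      using \<rho> \<sigma> inj by (auto simp: terminal_simplex_def dest: inj_onD)
    then have "f \<rho> \<le> b - 2 * \<epsilon>"
      using terminal_gap \<rho> by force
    moreover have "\<bar>f \<rho> - g \<rho>\<bar> \<le> \<epsilon>" "\<bar>f \<sigma> - g \<sigma>\<bar> \<le> \<epsilon>"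
      using fg \<sigma>(1) \<rho>(1) by (auto simp: sup_norm_le_def terminal_simplex_def)
    ultimately show ?thesis
      using \<sigma>(2) by (simp add: abs_le_iff)
  qed simp
  then show "bd K (elementary_chain \<rho>) \<in> boundaries K (sublevel K g (g \<sigma>)) n"
    using \<rho> by (auto simp: boundaries_def sublevel_def terminal_simplex_def intro!: chain_elementary_chain)
qed

lemma matched_bar_decomps:
  fixes K :: "('v::linorder) set set"
  assumes finK: "finite K"
    and bar: "(a, ereal b) \<in># barcode TYPE('k::field) K f n"
    and others: "\<forall>x\<in># barcode TYPE('k) K f n - {#(a, ereal b)#}.
                    fst x > a + 2 * \<epsilon> \<or> snd x < ereal (b - 2 * \<epsilon>)"
    and M: "stability_matching \<epsilon> (barcode TYPE('k) K f n) (barcode TYPE('k) K g n) M"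
    and matched: "((a, ereal b), (a', b')) \<in># M"
  obtains I af df and zf :: "nat \<Rightarrow> 'v set \<Rightarrow> 'k::field" and J ag dg and zg :: "nat \<Rightarrow> 'v set \<Rightarrow> 'k"
    and i0 j where "interval_decomp K f n I af df zf" "interval_decomp K g n J ag dg zg"
    "i0 \<in> I" "af i0 = a" "df i0 = ereal b"
    "\<And>i. i \<in> I \<Longrightarrow> i \<noteq> i0 \<Longrightarrow> a + 2 * \<epsilon> < af i \<or> df i < ereal (b - 2 * \<epsilon>)"
    "j \<in> J" "\<bar>a - ag j\<bar> \<le> \<epsilon>" "dg j = b'" "ereal_close \<epsilon> (ereal b) b'"
proof -
  obtain I af df and zf :: "nat \<Rightarrow> 'v set \<Rightarrow> 'k" where decf: "interval_decomp K f n I af df zf"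
    and bcf: "barcode TYPE('k) K f n = image_mset (\<lambda>i. (af i, df i)) (mset_set I)"
    using barcode_decomp[OF finK] .
  obtain J ag dg and zg :: "nat \<Rightarrow> 'v set \<Rightarrow> 'k" where decg: "interval_decomp K g n J ag dg zg"
    and bcg: "barcode TYPE('k) K g n = image_mset (\<lambda>i. (ag i, dg i)) (mset_set J)"
    using barcode_decomp[OF finK] .
  have finI: "finite I" and finJ: "finite J"
    using decf decg by (simp_all add: interval_decomp_def)
  obtain i0 where i0: "i0 \<in> I" "af i0 = a" "df i0 = ereal b"
    using bar bcf finI by auto
  have "barcode TYPE('k) K f n - {#(a, ereal b)#} = image_mset (\<lambda>i. (af i, df i)) (mset_set (I - {i0}))"
    using bcf i0 mset_set.remove[OF finI i0(1)] by simp
  then have others_I: "a + 2 * \<epsilon> < af i \<or> df i < ereal (b - 2 * \<epsilon>)" if "i \<in> I" "i \<noteq> i0" for i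
    using others that finI by auto
  have "(a', b') \<in># image_mset snd M"
    using matched by force
  then have "(a', b') \<in># barcode TYPE('k) K g n"
    using M unfolding stability_matching_def by (meson mset_subset_eqD)
  then obtain j where j: "j \<in> J" "ag j = a'" "dg j = b'"
    using bcg finJ by auto
  have "\<bar>a - a'\<bar> \<le> \<epsilon>" "ereal_close \<epsilon> (ereal b) b'"
    using M matched unfolding stability_matching_def by fastforce+
  then show ?thesis
    using that[OF decf decg i0 others_I j(1)] j(2,3) by blast
qed

definition birth_radius :: "'k::field itself \<Rightarrow> ('v::linorder) set set \<Rightarrow> ('v set \<Rightarrow> real) \<Rightarrow> nat
    \<Rightarrow> real \<Rightarrow> ereal" where
  "birth_radius TYPE('k) K f n b =
     Inf {ereal \<bar>f \<tau> - b\<bar> | \<tau>. birth_simplex TYPE('k) K f \<tau> \<and> card \<tau> = n + 2 \<and> f \<tau> > b}"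

definition terminal_radius :: "'k::field itself \<Rightarrow> ('v::linorder) set set \<Rightarrow> ('v set \<Rightarrow> real) \<Rightarrow> nat
    \<Rightarrow> real \<Rightarrow> ereal" where
  "terminal_radius TYPE('k) K f n b =
     Inf {ereal \<bar>f \<tau> - b\<bar> | \<tau>. terminal_simplex TYPE('k) K f \<tau> \<and> card \<tau> = n + 2 \<and> f \<tau> < b}"

lemma terminal_simplex_value_eq:
  fixes \<alpha> :: "'v::linorder set \<Rightarrow> 'k::field"
  assumes K: "simplicial_complex K" and filt: "filtration K f" and inj: "inj_on f K"
    and fg: "sup_norm_le K f g \<epsilon>"
    and \<alpha>: "termination_scale K f n a \<alpha> = ereal b" and ab: "a < b"
    and R: "ereal (2 * \<epsilon>) \<le> min (birth_radius TYPE('k) K f n b) (terminal_radius TYPE('k) K f n b)"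
    and iff: "\<And>q. r \<le> q \<Longrightarrow> \<alpha> \<in> boundaries K (sublevel K g q) n \<longleftrightarrow> v \<le> q"
    and r: "r \<le> b - \<epsilon>" "b - \<epsilon> \<le> v"
  shows "\<exists>\<sigma>\<in>K. f \<sigma> = b \<and> g \<sigma> = v"
proof -
  have finK: "finite K"
    using simplicial_complex_finite[OF K] .
  have birth_gap: "2 * \<epsilon> \<le> f \<tau> - b"
    if "birth_simplex TYPE('k) K f \<tau>" "card \<tau> = n + 2" "b < f \<tau>" for \<tau>
    using R that by (auto simp: birth_radius_def le_Inf_iff)
  have terminal_gap: "2 * \<epsilon> \<le> b - f \<tau>"
    if "terminal_simplex TYPE('k) K f \<tau>" "card \<tau> = n + 2" "f \<tau> < b" for \<tau>
    using R that by (auto simp: terminal_radius_def le_Inf_iff)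
  obtain \<sigma> where \<sigma>: "\<sigma> \<in> K" "f \<sigma> = b"
    using termination_value_attained[OF finK \<alpha> ab] by blast
  have \<alpha>_b: "\<alpha> \<in> boundaries K (sublevel K f b) n"
    using termination_scale_boundary[OF finK \<alpha>] .
  have "\<bar>f \<sigma> - g \<sigma>\<bar> \<le> \<epsilon>"
    using fg \<sigma>(1) by (simp add: sup_norm_le_def)
  then have "r \<le> g \<sigma>" "r \<le> v"
    using \<sigma>(2) r by (auto simp: abs_le_iff)
  have "\<alpha> \<in> boundaries K (sublevel K g (g \<sigma>)) n"
    using boundaries_sublevel_subset_at_terminal_value[OF K filt inj fg \<sigma> terminal_gap] \<alpha>_b
    by blast
  then have "v \<le> g \<sigma>"
    using iff[OF \<open>r \<le> g \<sigma>\<close>] by blast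
  moreover have "\<not> v < g \<sigma>"
    using not_boundary_below_terminal_value[OF K filt inj fg \<sigma> \<alpha>_b
        termination_scale_not_boundary_below[OF \<alpha> ab] birth_gap]
      iff[OF \<open>r \<le> v\<close>] by blast
  ultimately show ?thesis
    using \<sigma> by auto
qed

theorem theorem4p2:
  fixes K :: "('v::linorder) set set"
    and f g :: "'v set \<Rightarrow> real"
    and n :: nat
    and \<alpha> :: "'v set \<Rightarrow> 'k::field"
    and a b \<epsilon> a' :: real
    and b' :: ereal
    and M :: "((real \<times> ereal) \<times> (real \<times> ereal)) multiset"
  assumes K: "simplicial_complex K"
    and f_filt: "filtration K f" and f_inj: "inj_on f K"
    and n_pos: "1 \<le> n"
    and bar: "(a, ereal b) \<in># barcode TYPE('k) K f n"
    and alpha_cycle: "\<alpha> \<in> cycles K (sublevel K f a) n"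
    and alpha_nontriv: "\<alpha> \<notin> boundaries K (sublevel K f a) n"
    and alpha_birth: "birth_scale K f n a \<alpha> = ereal a"
    and alpha_term: "termination_scale K f n a \<alpha> = ereal b"
    and eps: "\<epsilon> < (b - a) / 4"
    and others: "\<forall>x\<in># barcode TYPE('k) K f n - {#(a, ereal b)#}.
                    fst x > a + 2 * \<epsilon> \<or> snd x < ereal (b - 2 * \<epsilon>)"
    and g_filt: "filtration K g" and g_inj: "inj_on g K"
    and fg: "sup_norm_le K f g \<epsilon>"
    and M: "stability_matching \<epsilon> (barcode TYPE('k) K f n) (barcode TYPE('k) K g n) M"
    and matched: "((a, ereal b), (a', b')) \<in># M"
  shows "(\<exists>r. \<alpha> \<in> cycles K (sublevel K g r) n \<and> \<alpha> \<notin> boundaries K (sublevel K g r) n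
              \<and> termination_scale K g n r \<alpha> = b')
       \<and> (let R\<^sub>u = Inf {ereal \<bar>f \<tau> - b\<bar> | \<tau>. birth_simplex TYPE('k) K f \<tau> \<and> card \<tau> = n + 2 \<and> f \<tau> > b};
              R\<^sub>l = Inf {ereal \<bar>f \<tau> - b\<bar> | \<tau>. terminal_simplex TYPE('k) K f \<tau> \<and> card \<tau> = n + 2 \<and> f \<tau> < b}
          in ereal (2 * \<epsilon>) \<le> min R\<^sub>u R\<^sub>l \<longrightarrow> (\<exists>\<sigma>\<in>K. f \<sigma> = b \<and> ereal (g \<sigma>) = b'))"
proof -
  have finK: "finite K"
    using simplicial_complex_finite[OF K] .
  obtain I af df and zf :: "nat \<Rightarrow> 'v set \<Rightarrow> 'k" and J ag dg and zg :: "nat \<Rightarrow> 'v set \<Rightarrow> 'k"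
    and i0 j where decf: "interval_decomp K f n I af df zf" and decg: "interval_decomp K g n J ag dg zg"
    and i0: "i0 \<in> I" "af i0 = a" "df i0 = ereal b"
    and others_I: "\<And>i. i \<in> I \<Longrightarrow> i \<noteq> i0 \<Longrightarrow> a + 2 * \<epsilon> < af i \<or> df i < ereal (b - 2 * \<epsilon>)"
    and j: "j \<in> J" "\<bar>a - ag j\<bar> \<le> \<epsilon>" "dg j = b'" "ereal_close \<epsilon> (ereal b) b'"
    using matched_bar_decomps[OF finK bar others M matched] by blast
  have ab: "a + 4 * \<epsilon> < b" and eps0: "0 \<le> \<epsilon>"
    using eps j(2) by auto
  then obtain v where v: "b' = ereal v" "\<bar>b - v\<bar> \<le> \<epsilon>"
    using j(4) by (auto simp: ereal_close_def)
  have iff: "\<alpha> \<in> boundaries K (sublevel K g q) n \<longleftrightarrow> v \<le> q" if "a + \<epsilon> \<le> q" for q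
    using j v that
    by (intro matched_bar_boundary_iff[OF decf decg fg i0 ab others_I j(1) _ _ v(2) alpha_cycle alpha_term])
      auto
  have "b - \<epsilon> \<le> v" "a + \<epsilon> < b - \<epsilon>"
    using v(2) ab eps0 by (auto simp: abs_le_iff)
  then have "termination_scale K g n (a + \<epsilon>) \<alpha> = ereal v"
    and "\<alpha> \<notin> boundaries K (sublevel K g (a + \<epsilon>)) n"
    using iff by (auto intro!: termination_scale_eqI)
  moreover have "\<alpha> \<in> cycles K (sublevel K g (a + \<epsilon>)) n"
    using cycles_shift[OF fg] alpha_cycle by blast
  moreover have "\<exists>\<sigma>\<in>K. f \<sigma> = b \<and> g \<sigma> = v"
    if "ereal (2 * \<epsilon>) \<le> min (birth_radius TYPE('k) K f n b) (terminal_radius TYPE('k) K f n b)"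
    using terminal_simplex_value_eq[OF K f_filt f_inj fg alpha_term _ that iff]
      \<open>b - \<epsilon> \<le> v\<close> \<open>a + \<epsilon> < b - \<epsilon>\<close> eps0 by simp
  ultimately show ?thesis
    unfolding Let_def birth_radius_def[symmetric] terminal_radius_def[symmetric] v(1) by blast
qed

end
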